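(* Let $n\ge3$, $\rho\in[0,1)$ and $\alpha\in[0,\tfrac{\pi}{2}]$. Then $$\int_{-1}^1 \frac{\big(\frac{n-2}{n}\rho\cos\alpha-x\big)(1-x^2)^{\frac{n-3}{2}}}{(1+\rho^2-2\rho x \cos\alpha)^{\frac{n}{2}-1}}\, {}_2 F_1\Big(\tfrac{n-2}{4}, \tfrac{n}{4};\tfrac{n-1}{2}; \tfrac{4\rho^2 \sin^2\alpha\, (1-x^2)}{(1+\rho^2-2\rho x \cos\alpha)^2}\Big)\, dx=0.$$
   Context: ${}_2F_1$ is the Gauss hypergeometric function. *)

theory Defs
  imports "HOL-Analysis.Analysis"
begin

definition hyp2F1 :: "real \<Rightarrow> real \<Rightarrow> real \<Rightarrow> real \<Rightarrow> real" where
  "hyp2F1 a b c z =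
     (\<Sum>k. pochhammer a k * pochhammer b k / (pochhammer c k * fact k) * z ^ k)"

end

theory Submission
  imports Defs
begin

text \<open>Put \<open>m = n/2 - 1\<close>. Then \<open>(1 + \<rho>\<^sup>2 - 2 \<rho> t) powr (-m)\<close> is the Newtonian potential
  \<open>|\<rho> e - u|^(2 - n)\<close> of \<open>\<real>^n\<close> at unit vectors \<open>e, u\<close> with \<open>\<langle>e, u\<rangle> = t\<close>, and
  \<open>(1 - x\<^sup>2) powr (m - 1/2)\<close> is the density of \<open>\<langle>e, u\<rangle>\<close> for \<open>u\<close> uniform on the sphere.
  Expanding the potential in powers of \<open>t = x cos \<alpha> + \<tau> sqrt(1 - x\<^sup>2) sin \<alpha>\<close> and averaging
  over \<open>\<tau>\<close> produces the hypergeometric factor. Integrating term by term, the moments of the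
  weight do not see the tilt by \<open>\<alpha>\<close>, so the integral is \<open>cos \<alpha>\<close> times a series \<open>\<Phi>(\<rho>)\<close>
  independent of \<open>\<alpha>\<close>. For \<open>\<alpha> = 0\<close> the integral vanishes by harmonicity: Laplace's equation
  turns the weighted averages of the potential and of \<open>x\<close> times the potential into Euler
  equations in \<open>\<rho>\<close>, so the first is constant (the mean value property) and the second is
  linear in \<open>\<rho>\<close> with slope \<open>(n - 2)/n\<close> times the first. Hence \<open>\<Phi> = 0\<close>.\<close>

section \<open>The Gegenbauer weight and its moments\<close>

lemma one_minus_square_nonneg: "x \<in> {-1..1} \<Longrightarrow> 0 \<le> 1 - (x::real)\<^sup>2"
  by (simp add: abs_square_le_1 abs_le_iff)

lemma one_minus_square_pos: "x \<in> {-1<..<1} \<Longrightarrow> 0 < 1 - (x::real)\<^sup>2"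
  by (simp add: abs_square_less_1 abs_less_iff)

lemma has_real_derivative_one_minus_square_powr:
  assumes "x \<in> {-1<..<1}"
  shows "((\<lambda>x. (1 - x\<^sup>2) powr p) has_real_derivative p * (1 - x\<^sup>2) powr (p - 1) * (- 2 * x)) (at x)"
proof -
  have "((\<lambda>x. 1 - x\<^sup>2) has_real_derivative - 2 * x) (at x)"
    by (auto intro!: derivative_eq_intros)
  from DERIV_fun_powr[OF this one_minus_square_pos[OF assms], of p] show ?thesis by simp
qed

lemma continuous_on_one_minus_square_powr:
  "0 < p \<Longrightarrow> continuous_on {-1..1} (\<lambda>x::real. (1 - x\<^sup>2) powr p)"
  using one_minus_square_nonneg by (intro continuous_on_powr' continuous_intros) auto

text \<open>Since \<open>0 powr 0 = 0\<close>, the function \<open>\<lambda>x. (1 - x\<^sup>2) powr 0\<close> vanishes at \<open>\<plusminus>1\<close>;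
  this variant of the weight is continuous on \<open>[-1, 1]\<close> for every \<open>\<nu> \<ge> 0\<close>.\<close>
definition gegenbauer_weight :: "real \<Rightarrow> real \<Rightarrow> real" where
  "gegenbauer_weight \<nu> x = (if \<nu> = 0 then 1 else (1 - x\<^sup>2) powr \<nu>)"

lemma gegenbauer_weight_eq: "x \<in> {-1<..<1} \<Longrightarrow> gegenbauer_weight \<nu> x = (1 - x\<^sup>2) powr \<nu>"
  using one_minus_square_pos[of x] by (simp add: gegenbauer_weight_def)

lemma gegenbauer_weight_minus: "gegenbauer_weight \<nu> (- x) = gegenbauer_weight \<nu> x"
  by (simp add: gegenbauer_weight_def)

lemma gegenbauer_weight_nonneg: "0 \<le> gegenbauer_weight \<nu> x"
  by (simp add: gegenbauer_weight_def)

lemma gegenbauer_weight_le_1: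
  assumes "x \<in> {-1..1}" "\<nu> \<ge> 0"
  shows "gegenbauer_weight \<nu> x \<le> 1"
  using one_minus_square_nonneg[OF assms(1)] assms(2) by (simp add: gegenbauer_weight_def powr_le1)

lemma continuous_on_gegenbauer_weight:
  assumes "\<nu> \<ge> 0"
  shows "continuous_on {-1..1} (gegenbauer_weight \<nu>)"
  using continuous_on_one_minus_square_powr[of \<nu>] assms
  by (cases "\<nu> = 0") (simp_all add: gegenbauer_weight_def)

lemma gegenbauer_weight_add_nat:
  assumes "x \<in> {-1..1}" "\<nu> \<ge> 0"
  shows "(1 - x\<^sup>2) ^ l * gegenbauer_weight \<nu> x = gegenbauer_weight (\<nu> + real l) x"
proof -
  have t: "0 \<le> 1 - x\<^sup>2" using assms(1) by (rule one_minus_square_nonneg)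
  show ?thesis
  proof (cases "1 - x\<^sup>2 = 0")
    case True
    then show ?thesis using assms(2) by (cases "l = 0") (auto simp: gegenbauer_weight_def)
  next
    case False
    with t have "0 < 1 - x\<^sup>2" by simp
    then show ?thesis using assms(2)
      by (auto simp: gegenbauer_weight_def powr_add powr_realpow)
  qed
qed

definition moment :: "real \<Rightarrow> nat \<Rightarrow> real" where
  "moment \<nu> k = integral {-1..1} (\<lambda>x. x ^ k * gegenbauer_weight \<nu> x)"

lemma has_integral_moment:
  "\<nu> \<ge> 0 \<Longrightarrow> ((\<lambda>x. x ^ k * gegenbauer_weight \<nu> x) has_integral moment \<nu> k) {-1..1}"
  unfolding moment_def
  by (intro integrable_integral integrable_continuous_interval continuous_intros
      continuous_on_gegenbauer_weight)

lemma moment_odd: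
  assumes "odd k"
  shows "moment \<nu> k = 0"
proof -
  let ?f = "\<lambda>x::real. x ^ k * gegenbauer_weight \<nu> x"
  have "integral {-1..1} ?f = integral {-1..1} (\<lambda>x. ?f (-x))"
    using Henstock_Kurzweil_Integration.integral_reflect_real[of 1 "-1" ?f] by (simp only: minus_minus)
  also have "(\<lambda>x. ?f (-x)) = (\<lambda>x. - ?f x)"
    using assms by (simp add: gegenbauer_weight_minus)
  finally show ?thesis by (simp add: moment_def)
qed

lemma abs_moment_le:
  assumes "\<nu> \<ge> 0"
  shows "\<bar>moment \<nu> k\<bar> \<le> 2"
proof -
  have "norm (x ^ k * gegenbauer_weight \<nu> x) \<le> 1" if "x \<in> cbox (-1) 1" for x :: real
  proof -
    have "\<bar>x\<bar> ^ k \<le> 1" using that by (intro power_le_one) auto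
    moreover have "gegenbauer_weight \<nu> x \<le> 1" using that assms by (simp add: gegenbauer_weight_le_1)
    ultimately show ?thesis
      by (simp add: abs_mult power_abs gegenbauer_weight_nonneg mult_le_one)
  qed
  then show ?thesis
    using has_integral_bound[of 1 "\<lambda>x. x ^ k * gegenbauer_weight \<nu> x" "moment \<nu> k" "-1" 1]
      has_integral_moment[OF assms, of k] by simp
qed

lemma moment_add2:
  assumes "\<nu> \<ge> 0"
  shows "moment \<nu> (k + 2) + moment (\<nu> + 1) k = moment \<nu> k"
proof -
  have "((\<lambda>x. x ^ (k + 2) * gegenbauer_weight \<nu> x + x ^ k * gegenbauer_weight (\<nu> + 1) x) has_integral
        moment \<nu> (k + 2) + moment (\<nu> + 1) k) {-1..1}"
    using assms by (intro has_integral_add has_integral_moment) auto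
  moreover have "x ^ (k + 2) * gegenbauer_weight \<nu> x + x ^ k * gegenbauer_weight (\<nu> + 1) x
      = x ^ k * gegenbauer_weight \<nu> x" if "x \<in> {-1..1}" for x
  proof -
    have "gegenbauer_weight (\<nu> + 1) x = (1 - x\<^sup>2) * gegenbauer_weight \<nu> x"
      using gegenbauer_weight_add_nat[OF that assms, of 1] by simp
    then show ?thesis by (simp only:) (simp add: algebra_simps power2_eq_square power_add)
  qed
  ultimately have "((\<lambda>x. x ^ k * gegenbauer_weight \<nu> x) has_integral
      moment \<nu> (k + 2) + moment (\<nu> + 1) k) {-1..1}"
    by (rule has_integral_eq[rotated])
  then show ?thesis using has_integral_moment[OF assms] has_integral_unique by blast
qed

lemma moment_by_parts:
  assumes "\<nu> \<ge> 0"
  shows "real (k + 1) * moment (\<nu> + 1) k = 2 * (\<nu> + 1) * moment \<nu> (k + 2)"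
proof -
  define F where "F x = x ^ (k + 1) * gegenbauer_weight (\<nu> + 1) x" for x
  define F' where "F' x = real (k + 1) * (x ^ k * gegenbauer_weight (\<nu> + 1) x)
    - 2 * (\<nu> + 1) * (x ^ (k + 2) * gegenbauer_weight \<nu> x)" for x
  have "(F has_vector_derivative F' x) (at x)" if x: "x \<in> {-1<..<1}" for x
  proof -
    have "((\<lambda>x. x ^ (k + 1) * (1 - x\<^sup>2) powr (\<nu> + 1)) has_real_derivative
        real (k + 1) * x ^ k * (1 - x\<^sup>2) powr (\<nu> + 1)
        + x ^ (k + 1) * ((\<nu> + 1) * (1 - x\<^sup>2) powr \<nu> * (- 2 * x))) (at x)"
      using DERIV_pow[of "k + 1" x] has_real_derivative_one_minus_square_powr[OF x, of "\<nu> + 1"]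
      by (rule DERIV_mult'[THEN DERIV_cong]) simp
    moreover have "F = (\<lambda>x. x ^ (k + 1) * (1 - x\<^sup>2) powr (\<nu> + 1))"
      using assms by (auto simp: F_def gegenbauer_weight_def)
    moreover have "real (k + 1) * x ^ k * (1 - x\<^sup>2) powr (\<nu> + 1)
        + x ^ (k + 1) * ((\<nu> + 1) * (1 - x\<^sup>2) powr \<nu> * (- 2 * x)) = F' x"
      using x by (simp add: F'_def gegenbauer_weight_eq algebra_simps power_add power2_eq_square)
    ultimately show ?thesis by (simp add: has_real_derivative_iff_has_vector_derivative)
  qed
  moreover have "continuous_on {-1..1} F"
    unfolding F_def using assms
    by (intro continuous_intros continuous_on_gegenbauer_weight) simp
  moreover have "F 1 - F (-1) = 0"
    using assms by (simp add: F_def gegenbauer_weight_def)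
  ultimately have I0: "(F' has_integral 0) {-1..1}"
    using fundamental_theorem_of_calculus_interior[of "-1" 1 F F'] by auto
  have I: "(F' has_integral real (k + 1) * moment (\<nu> + 1) k - 2 * (\<nu> + 1) * moment \<nu> (k + 2)) {-1..1}"
    unfolding F'_def using assms
    by (intro has_integral_diff has_integral_mult_right has_integral_moment) auto
  from has_integral_unique[OF I I0] show ?thesis by simp
qed

lemma moment_even_step:
  assumes "\<nu> \<ge> 0"
  shows "moment \<nu> (2 * k + 2) = (2 * real k + 1) / (2 * real k + 2 * \<nu> + 3) * moment \<nu> (2 * k)"
    and "moment (\<nu> + 1) (2 * k) = (2 * \<nu> + 2) / (2 * real k + 2 * \<nu> + 3) * moment \<nu> (2 * k)"
proof -
  define M0 M1 M2 where "M0 = moment \<nu> (2 * k)" and "M1 = moment \<nu> (2 * k + 2)"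
    and "M2 = moment (\<nu> + 1) (2 * k)"
  have add2: "M1 + M2 = M0"
    using moment_add2[OF assms, of "2 * k"] by (simp add: M0_def M1_def M2_def)
  have parts: "(2 * real k + 1) * M2 = (2 * \<nu> + 2) * M1"
    using moment_by_parts[OF assms, of "2 * k"] by (simp add: M1_def M2_def algebra_simps)
  have "(2 * real k + 2 * \<nu> + 3) * M1 = (2 * real k + 1) * M0"
    using add2 parts by (simp add: algebra_simps flip: add2)
  moreover have "(2 * real k + 2 * \<nu> + 3) * M2 = (2 * \<nu> + 2) * M0"
    using add2 parts by (simp add: algebra_simps flip: add2)
  moreover have "2 * real k + 2 * \<nu> + 3 > 0" using assms by simp
  ultimately show "M1 = (2 * real k + 1) / (2 * real k + 2 * \<nu> + 3) * M0"
    and "M2 = (2 * \<nu> + 2) / (2 * real k + 2 * \<nu> + 3) * M0"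
    by (simp_all add: field_simps)
qed

lemma moment_even:
  assumes "\<nu> \<ge> 0"
  shows "moment \<nu> (2 * k) = moment \<nu> 0 * pochhammer (1/2) k / pochhammer (\<nu> + 3/2) k"
proof (induction k)
  case (Suc k)
  have "moment \<nu> (2 * Suc k) = (2 * real k + 1) / (2 * real k + 2 * \<nu> + 3) * moment \<nu> (2 * k)"
    using moment_even_step(1)[OF assms, of k] by simp
  also have "(2 * real k + 1) / (2 * real k + 2 * \<nu> + 3) = (1/2 + real k) / (\<nu> + 3/2 + real k)"
    using assms by (simp add: field_simps)
  also have "moment \<nu> (2 * k) = moment \<nu> 0 * pochhammer (1/2) k / pochhammer (\<nu> + 3/2) k"
    by (rule Suc.IH)
  finally show ?case by (simp add: pochhammer_Suc mult_ac)
qed simp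

lemma moment_0_shift:
  assumes "\<nu> \<ge> 0"
  shows "moment (\<nu> + real l) 0 = moment \<nu> 0 * pochhammer (\<nu> + 1) l / pochhammer (\<nu> + 3/2) l"
proof (induction l)
  case (Suc l)
  have "moment (\<nu> + real (Suc l)) 0
      = (2 * (\<nu> + real l) + 2) / (2 * (\<nu> + real l) + 3) * moment (\<nu> + real l) 0"
    using moment_even_step(2)[of "\<nu> + real l" 0] assms by (simp add: add_ac)
  also have "(2 * (\<nu> + real l) + 2) / (2 * (\<nu> + real l) + 3) = (\<nu> + 1 + real l) / (\<nu> + 3/2 + real l)"
    using assms by (simp add: field_simps)
  finally show ?case by (simp add: Suc pochhammer_Suc mult_ac)
qed simp

lemma moment_closed_form:
  assumes "\<nu> \<ge> 0"
  shows "moment (\<nu> + real l) (2 * k)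
    = moment \<nu> 0 * pochhammer (\<nu> + 1) l * pochhammer (1/2) k / pochhammer (\<nu> + 3/2) (l + k)"
proof -
  have "pochhammer (\<nu> + 3/2) (l + k) = pochhammer (\<nu> + 3/2) l * pochhammer (\<nu> + real l + 3/2) k"
    unfolding pochhammer_product' by (simp add: add_ac)
  moreover have "pochhammer (\<nu> + 3/2) l > 0" "pochhammer (\<nu> + real l + 3/2) k > 0"
    using assms by (auto intro!: pochhammer_pos)
  moreover have "moment (\<nu> + real l) (2 * k)
      = moment (\<nu> + real l) 0 * pochhammer (1/2) k / pochhammer (\<nu> + real l + 3/2) k"
    using moment_even[of "\<nu> + real l" k] assms by (simp add: add_ac)
  ultimately show ?thesis by (simp add: moment_0_shift[OF assms])
qed

section \<open>Averages over circles of latitude\<close>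

lemma choose_even_pochhammer_half:
  "real (2 * (l + d) choose (2 * l)) * pochhammer (1/2) l * pochhammer (1/2) d
    = real ((l + d) choose l) * pochhammer (1/2) (l + d)"
proof -
  have choose2: "real (2 * (l + d) choose (2 * l)) = fact (2 * l + 2 * d) / (fact (2 * l) * fact (2 * d))"
    using binomial_fact[of "2 * l" "2 * (l + d)", where 'a=real] by (simp add: algebra_simps)
  have choose1: "real ((l + d) choose l) = fact (l + d) / (fact l * fact d)"
    using binomial_fact[of l "l + d", where 'a=real] by simp
  have half: "pochhammer (1/2) k = fact (2 * k) / (2 ^ (2 * k) * fact k :: real)" for k
    using fact_double[of k, where 'a=real] by (simp add: field_simps)
  show ?thesis
    unfolding half choose1 choose2 by (simp add: field_simps power_add algebra_simps)
qed

lemma choose_odd_pochhammer_half: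
  "real ((2 * (l + d) + 1) choose (2 * l)) * pochhammer (1/2) l * pochhammer (1/2) (d + 1)
    = real ((l + d) choose l) * pochhammer (1/2) (l + d + 1)"
proof -
  have "(2 * (l + d) + 1 - 2 * l) * ((2 * (l + d) + 1) choose (2 * l))
      = (2 * (l + d) + 1) * ((2 * (l + d) + 1 - 1) choose (2 * l))"
    by (rule binomial_absorb_comp)
  moreover have "2 * (l + d) + 1 - 2 * l = 2 * d + 1" by simp
  ultimately have "real ((2 * d + 1) * ((2 * (l + d) + 1) choose (2 * l)))
      = real ((2 * (l + d) + 1) * (2 * (l + d) choose (2 * l)))"
    by simp
  then have absorb: "(2 * real d + 1) * real ((2 * (l + d) + 1) choose (2 * l))
      = (2 * real (l + d) + 1) * real (2 * (l + d) choose (2 * l))"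
    by (simp add: algebra_simps)
  have "(2 * real d + 1) * (real ((2 * (l + d) + 1) choose (2 * l)) * pochhammer (1/2) l
        * pochhammer (1/2) (d + 1))
      = ((2 * real d + 1) * real ((2 * (l + d) + 1) choose (2 * l))) * pochhammer (1/2) l
        * pochhammer (1/2) d * (1/2 + real d)"
    by (simp add: pochhammer_Suc mult_ac)
  also have "\<dots> = (2 * real (l + d) + 1) * (real (2 * (l + d) choose (2 * l)) * pochhammer (1/2) l
        * pochhammer (1/2) d) * (1/2 + real d)"
    unfolding absorb by (simp add: mult_ac)
  also have "\<dots> = (2 * real d + 1) * (real ((l + d) choose l) * pochhammer (1/2) (l + d + 1))"
    unfolding choose_even_pochhammer_half by (simp add: pochhammer_Suc algebra_simps)
  finally have "(2 * real d + 1) * (real ((2 * (l + d) + 1) choose (2 * l)) * pochhammer (1/2) l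
        * pochhammer (1/2) (d + 1))
      = (2 * real d + 1) * (real ((l + d) choose l) * pochhammer (1/2) (l + d + 1))" .
  moreover have "2 * real d + 1 \<noteq> 0" by linarith
  ultimately show ?thesis by (simp only: mult_cancel_left) simp
qed

lemma choose_pochhammer_half:
  assumes "e \<le> 1" "l \<le> J"
  shows "real ((2 * J + e) choose (2 * l)) * pochhammer (1/2) l * pochhammer (1/2) (J + e - l)
    = real (J choose l) * pochhammer (1/2) (J + e)"
proof -
  obtain d where J: "J = l + d" using assms(2) le_Suc_ex by blast
  consider "e = 0" | "e = 1" using assms(1) by linarith
  then show ?thesis
  proof cases
    case 1
    then show ?thesis using choose_even_pochhammer_half[of l d] by (simp add: J)
  next
    case 2
    then show ?thesis using choose_odd_pochhammer_half[of l d] by (simp add: J add_ac)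
  qed
qed

definition even_moment_ratio :: "real \<Rightarrow> nat \<Rightarrow> real" where
  "even_moment_ratio \<nu> l = pochhammer (1/2) l / pochhammer (\<nu> + 1) l"

lemma choose_even_moment_ratio_moment:
  assumes "\<nu> \<ge> 0" "e \<le> 1" "l \<le> J"
  shows "real ((2 * J + e) choose (2 * l)) * even_moment_ratio \<nu> l * moment (\<nu> + real l) (2 * (J + e - l))
    = real (J choose l) * moment \<nu> (2 * (J + e))"
proof -
  have "pochhammer (\<nu> + 1) l > 0" using assms by (intro pochhammer_pos) simp
  moreover have "moment (\<nu> + real l) (2 * (J + e - l))
      = moment \<nu> 0 * pochhammer (\<nu> + 1) l * pochhammer (1/2) (J + e - l) / pochhammer (\<nu> + 3/2) (J + e)"
    using moment_closed_form[OF assms(1), of l "J + e - l"] assms(3) by simp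
  moreover have "moment \<nu> (2 * (J + e)) = moment \<nu> 0 * pochhammer (1/2) (J + e) / pochhammer (\<nu> + 3/2) (J + e)"
    using moment_closed_form[OF assms(1), of 0 "J + e"] by simp
  ultimately show ?thesis
    using choose_pochhammer_half[OF assms(2,3)] unfolding even_moment_ratio_def
    by (simp add: field_simps)
qed

text \<open>The mean of \<open>(c x + s sqrt(1 - x\<^sup>2) t)^j\<close> over \<open>t \<in> [-1, 1]\<close> with weight
  \<open>(1 - t\<^sup>2) powr (\<nu> - 1/2)\<close>: odd powers of \<open>t\<close> average to \<open>0\<close>, and by \<open>moment_even\<close>
  the mean of \<open>t^(2l)\<close> is \<open>even_moment_ratio \<nu> l\<close>.\<close>
definition mean_power :: "real \<Rightarrow> real \<Rightarrow> real \<Rightarrow> nat \<Rightarrow> real \<Rightarrow> real" where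
  "mean_power \<nu> c s j x = (\<Sum>l\<le>j div 2.
     real (j choose (2 * l)) * (c * x) ^ (j - 2 * l) * (s\<^sup>2 * (1 - x\<^sup>2)) ^ l * even_moment_ratio \<nu> l)"

lemma has_integral_mean_power_sum:
  assumes "\<nu> \<ge> 0"
  shows "((\<lambda>x. x ^ e * mean_power \<nu> c s j x * gegenbauer_weight \<nu> x) has_integral
    (\<Sum>l\<le>j div 2. real (j choose (2 * l)) * c ^ (j - 2 * l) * (s\<^sup>2) ^ l * even_moment_ratio \<nu> l
      * moment (\<nu> + real l) (j - 2 * l + e))) {-1..1}"
proof -
  have int: "((\<lambda>x. \<Sum>l\<le>j div 2. real (j choose (2 * l)) * c ^ (j - 2 * l) * (s\<^sup>2) ^ l * even_moment_ratio \<nu> l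
      * (x ^ (j - 2 * l + e) * gegenbauer_weight (\<nu> + real l) x)) has_integral
    (\<Sum>l\<le>j div 2. real (j choose (2 * l)) * c ^ (j - 2 * l) * (s\<^sup>2) ^ l * even_moment_ratio \<nu> l
      * moment (\<nu> + real l) (j - 2 * l + e))) {-1..1}"
    using assms by (intro has_integral_sum has_integral_mult_right has_integral_moment) auto
  have eq: "(\<Sum>l\<le>j div 2. real (j choose (2 * l)) * c ^ (j - 2 * l) * (s\<^sup>2) ^ l * even_moment_ratio \<nu> l
      * (x ^ (j - 2 * l + e) * gegenbauer_weight (\<nu> + real l) x))
    = x ^ e * mean_power \<nu> c s j x * gegenbauer_weight \<nu> x" if "x \<in> {-1..1}" for x
    unfolding mean_power_def sum_distrib_left sum_distrib_right
  proof (rule sum.cong)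
    fix l
    have w: "gegenbauer_weight (\<nu> + real l) x = (1 - x\<^sup>2) ^ l * gegenbauer_weight \<nu> x"
      using gegenbauer_weight_add_nat[OF that assms] by simp
    show "real (j choose (2 * l)) * c ^ (j - 2 * l) * (s\<^sup>2) ^ l * even_moment_ratio \<nu> l
        * (x ^ (j - 2 * l + e) * gegenbauer_weight (\<nu> + real l) x)
      = x ^ e * (real (j choose (2 * l)) * (c * x) ^ (j - 2 * l) * (s\<^sup>2 * (1 - x\<^sup>2)) ^ l
        * even_moment_ratio \<nu> l) * gegenbauer_weight \<nu> x"
      unfolding w power_add power_mult_distrib by (simp only: mult_ac)
  qed simp
  show ?thesis by (rule has_integral_eq[OF eq int])
qed

lemma sum_mean_power_moments:
  assumes "\<nu> \<ge> 0" "c\<^sup>2 + s\<^sup>2 = 1" "e \<le> 1"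
  shows "(\<Sum>l\<le>j div 2. real (j choose (2 * l)) * c ^ (j - 2 * l) * (s\<^sup>2) ^ l * even_moment_ratio \<nu> l
      * moment (\<nu> + real l) (j - 2 * l + e)) = c ^ e * moment \<nu> (j + e)"
proof (cases "even (j + e)")
  case True
  define J where "J = j div 2"
  have j: "j = 2 * J + e" using True assms(3) unfolding J_def by presburger
  have "(\<Sum>l\<le>j div 2. real (j choose (2 * l)) * c ^ (j - 2 * l) * (s\<^sup>2) ^ l * even_moment_ratio \<nu> l
      * moment (\<nu> + real l) (j - 2 * l + e))
    = (\<Sum>l\<le>J. c ^ e * moment \<nu> (2 * (J + e)) * (real (J choose l) * (s\<^sup>2) ^ l * (c\<^sup>2) ^ (J - l)))"
  proof (rule sum.cong)
    fix l assume "l \<in> {..J}"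
    then have l: "l \<le> J" by simp
    have "j - 2 * l + e = 2 * (J + e - l)" using j l by simp
    moreover have "c ^ (j - 2 * l) = c ^ e * (c\<^sup>2) ^ (J - l)"
      using j l by (simp add: power_mult[symmetric] power_add[symmetric] algebra_simps)
    ultimately show "real (j choose (2 * l)) * c ^ (j - 2 * l) * (s\<^sup>2) ^ l * even_moment_ratio \<nu> l
        * moment (\<nu> + real l) (j - 2 * l + e)
      = c ^ e * moment \<nu> (2 * (J + e)) * (real (J choose l) * (s\<^sup>2) ^ l * (c\<^sup>2) ^ (J - l))"
      using choose_even_moment_ratio_moment[OF assms(1,3) l] by (simp add: j mult_ac)
  qed (simp add: J_def)
  also have "\<dots> = c ^ e * moment \<nu> (2 * (J + e)) * (s\<^sup>2 + c\<^sup>2) ^ J"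
    by (simp add: binomial_ring sum_distrib_left)
  also have "\<dots> = c ^ e * moment \<nu> (j + e)"
    using assms(2) by (simp add: j add.commute)
  finally show ?thesis .
next
  case False
  then have "odd (j - 2 * l + e)" if "l \<le> j div 2" for l
    using that by (auto simp: dvd_diff_nat)
  with False show ?thesis by (simp add: moment_odd)
qed

lemma has_integral_mean_power:
  assumes "\<nu> \<ge> 0" "c\<^sup>2 + s\<^sup>2 = 1" "e \<le> 1"
  shows "((\<lambda>x. x ^ e * mean_power \<nu> c s j x * gegenbauer_weight \<nu> x) has_integral
    c ^ e * moment \<nu> (j + e)) {-1..1}"
  using has_integral_mean_power_sum[OF assms(1), of e c s j] unfolding sum_mean_power_moments[OF assms] .

lemma pochhammer_mono:
  fixes a b :: real
  assumes "0 < a" "a \<le> b"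
  shows "pochhammer a l \<le> pochhammer b l"
proof (induction l)
  case (Suc l)
  have "pochhammer a l * (a + real l) \<le> pochhammer b l * (b + real l)"
    by (rule mult_mono) (use Suc assms in \<open>auto intro: pochhammer_nonneg less_imp_le\<close>)
  then show ?case by (simp add: pochhammer_Suc)
qed simp

lemma even_moment_ratio_nonneg: "-1 < \<nu> \<Longrightarrow> 0 \<le> even_moment_ratio \<nu> l"
  unfolding even_moment_ratio_def
  by (intro divide_nonneg_nonneg pochhammer_nonneg) auto

lemma even_moment_ratio_le_1:
  assumes "-1/2 \<le> \<nu>"
  shows "even_moment_ratio \<nu> l \<le> 1"
proof -
  have "pochhammer (1/2) l \<le> pochhammer (\<nu> + 1) l" using assms by (intro pochhammer_mono) auto
  moreover have "pochhammer (\<nu> + 1) l > 0" using assms by (intro pochhammer_pos) simp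
  ultimately show ?thesis by (simp add: even_moment_ratio_def)
qed

lemma sum_even_indices_le:
  fixes f :: "nat \<Rightarrow> real"
  assumes "\<And>k. f k \<ge> 0"
  shows "(\<Sum>l\<le>j div 2. f (2 * l)) \<le> (\<Sum>k\<le>j. f k)"
proof -
  have "(\<Sum>l\<le>j div 2. f (2 * l)) = sum f ((\<lambda>l. 2 * l) ` {..j div 2})"
    by (subst sum.reindex) (auto simp: inj_on_def)
  also have "\<dots> \<le> sum f {..j}"
    by (rule sum_mono2) (use assms in auto)
  finally show ?thesis .
qed

lemma abs_mult_add_sqrt_le_1:
  assumes "c\<^sup>2 + s\<^sup>2 = 1" "x \<in> {-1..1}"
  shows "\<bar>c * x\<bar> + sqrt (s\<^sup>2 * (1 - x\<^sup>2)) \<le> 1"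
proof -
  define r where "r = sqrt (1 - x\<^sup>2)"
  have "0 \<le> 1 - x\<^sup>2" using assms(2) by (rule one_minus_square_nonneg)
  then have r: "r \<ge> 0" "r\<^sup>2 = 1 - x\<^sup>2" by (simp_all add: r_def)
  have "(\<bar>c\<bar> * \<bar>x\<bar> + \<bar>s\<bar> * r)\<^sup>2 + (\<bar>c\<bar> * r - \<bar>s\<bar> * \<bar>x\<bar>)\<^sup>2 = (c\<^sup>2 + s\<^sup>2) * (x\<^sup>2 + r\<^sup>2)"
    by (simp add: power2_eq_square algebra_simps)
  also have "\<dots> = 1" using assms(1) r(2) by simp
  finally have "(\<bar>c\<bar> * \<bar>x\<bar> + \<bar>s\<bar> * r)\<^sup>2 \<le> 1"
    using zero_le_power2[of "\<bar>c\<bar> * r - \<bar>s\<bar> * \<bar>x\<bar>"] by linarith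
  then have "\<bar>c\<bar> * \<bar>x\<bar> + \<bar>s\<bar> * r \<le> 1"
    using power2_le_imp_le[of "\<bar>c\<bar> * \<bar>x\<bar> + \<bar>s\<bar> * r" 1] by simp
  then show ?thesis by (simp add: r_def real_sqrt_mult abs_mult)
qed

lemma mean_power_abs_terms_le_1:
  assumes "-1/2 \<le> \<nu>" "c\<^sup>2 + s\<^sup>2 = 1" "x \<in> {-1..1}"
  shows "(\<Sum>l\<le>j div 2. \<bar>real (j choose (2 * l)) * (c * x) ^ (j - 2 * l) * (s\<^sup>2 * (1 - x\<^sup>2)) ^ l
    * even_moment_ratio \<nu> l\<bar>) \<le> 1"
proof -
  define X V where "X = \<bar>c * x\<bar>" and "V = s\<^sup>2 * (1 - x\<^sup>2)"
  have V: "0 \<le> V" using one_minus_square_nonneg[OF assms(3)] by (simp add: V_def)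
  define f where "f k = real (j choose k) * sqrt V ^ k * X ^ (j - k)" for k
  have "(\<Sum>l\<le>j div 2. \<bar>real (j choose (2 * l)) * (c * x) ^ (j - 2 * l) * (s\<^sup>2 * (1 - x\<^sup>2)) ^ l
      * even_moment_ratio \<nu> l\<bar>) \<le> (\<Sum>l\<le>j div 2. f (2 * l))"
  proof (rule sum_mono)
    fix l
    have "V ^ l = sqrt V ^ (2 * l)" using V by (simp add: power_mult)
    moreover have "0 \<le> even_moment_ratio \<nu> l"
      using assms(1) by (simp add: even_moment_ratio_nonneg)
    ultimately have "\<bar>real (j choose (2 * l)) * (c * x) ^ (j - 2 * l) * (s\<^sup>2 * (1 - x\<^sup>2)) ^ l
        * even_moment_ratio \<nu> l\<bar> = f (2 * l) * even_moment_ratio \<nu> l"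
      using V unfolding f_def X_def V_def[symmetric] by (simp add: abs_mult power_abs)
    also have "\<dots> \<le> f (2 * l)"
      using assms(1) V by (intro mult_right_le_one_le) (simp_all add: f_def X_def
        even_moment_ratio_nonneg even_moment_ratio_le_1)
    finally show "\<bar>real (j choose (2 * l)) * (c * x) ^ (j - 2 * l) * (s\<^sup>2 * (1 - x\<^sup>2)) ^ l
        * even_moment_ratio \<nu> l\<bar> \<le> f (2 * l)" .
  qed
  also have "\<dots> \<le> (\<Sum>k\<le>j. f k)" by (rule sum_even_indices_le) (simp add: f_def X_def V)
  also have "\<dots> = (sqrt V + X) ^ j" by (simp add: f_def binomial_ring)
  also have "\<dots> \<le> 1"
    using abs_mult_add_sqrt_le_1[OF assms(2,3)] V by (intro power_le_one) (auto simp: X_def V_def)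
  finally show ?thesis .
qed

lemma abs_mean_power_le_1:
  assumes "-1/2 \<le> \<nu>" "c\<^sup>2 + s\<^sup>2 = 1" "x \<in> {-1..1}"
  shows "\<bar>mean_power \<nu> c s j x\<bar> \<le> 1"
  unfolding mean_power_def using sum_abs mean_power_abs_terms_le_1[OF assms] by (rule order_trans)

section \<open>The hypergeometric series of the averaged Newtonian potential\<close>

lemma pochhammer_binomial_series:
  fixes t p :: real
  assumes "\<bar>t\<bar> < 1"
  shows "(\<lambda>i. pochhammer p i / fact i * t ^ i) sums (1 - t) powr (- p)"
proof -
  have "((- p) gchoose i) * (- t) ^ i = pochhammer p i / fact i * t ^ i" for i
  proof -
    have "((- p) gchoose i) * (- t) ^ i = ((-1) ^ i * (-1) ^ i) * (pochhammer p i / fact i * t ^ i)"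
      unfolding gbinomial_pochhammer by (simp add: power_minus[of t] mult_ac)
    also have "(-1 :: real) ^ i * (-1) ^ i = 1" by (simp add: power_mult_distrib[symmetric])
    finally show ?thesis by simp
  qed
  moreover have "\<bar>- t\<bar> < 1" using assms by simp
  ultimately show ?thesis using gen_binomial_real[of "- t" "- p"] by simp
qed

lemma sums_half_triangle_rows:
  fixes F :: "nat \<Rightarrow> nat \<Rightarrow> real"
  assumes abs: "summable (\<lambda>j. \<Sum>l\<le>j div 2. \<bar>F j l\<bar>)"
    and rows: "\<And>l. (\<lambda>i. F (i + 2 * l) l) sums b l"
  shows "summable (\<lambda>j. \<Sum>l\<le>j div 2. F j l)" and "b sums (\<Sum>j. \<Sum>l\<le>j div 2. F j l)"
proof -
  define B where "B j = {..j div 2}" for j :: nat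
  define G where "G = (\<lambda>(j, l). F j l)"
  define S where "S = infsum G (Sigma UNIV B)"
  have "(\<lambda>p. norm (G p)) summable_on Sigma UNIV B"
  proof (rule summable_on_SigmaI[where g = "\<lambda>j. \<Sum>l\<le>j div 2. \<bar>F j l\<bar>"])
    show "((\<lambda>l. norm (G (j, l))) has_sum (\<Sum>l\<le>j div 2. \<bar>F j l\<bar>)) (B j)" for j
      by (simp add: G_def B_def)
    show "(\<lambda>j. \<Sum>l\<le>j div 2. \<bar>F j l\<bar>) summable_on UNIV"
      using abs by (rule summable_nonneg_imp_summable_on) simp
  qed simp
  then have GS: "(G has_sum S) (Sigma UNIV B)"
    unfolding S_def by (rule has_sum_infsum[OF abs_summable_summable])
  have "((\<lambda>j. \<Sum>l\<le>j div 2. F j l) has_sum S) UNIV"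
    by (rule has_sum_Sigma'[OF GS]) (simp add: G_def B_def)
  then have sums_S: "(\<lambda>j. \<Sum>l\<le>j div 2. F j l) sums S" by (rule has_sum_imp_sums)
  then show "summable (\<lambda>j. \<Sum>l\<le>j div 2. F j l)" by (rule sums_summable)
  have "bij_betw (\<lambda>(l, i). (i + 2 * l, l)) (UNIV \<times> UNIV) (Sigma UNIV B)"
    by (rule bij_betw_byWitness[where f' = "\<lambda>(j, l). (l, j - 2 * l)"]) (auto simp: B_def)
  from has_sum_reindex_bij_betw[OF this, of G S] GS
  have "((\<lambda>p. G ((\<lambda>(l, i). (i + 2 * l, l)) p)) has_sum S) (UNIV \<times> UNIV)" by simp
  moreover have "(\<lambda>p. G ((\<lambda>(l, i). (i + 2 * l, l)) p)) = (\<lambda>(l, i). F (i + 2 * l) l)"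
    by (auto simp: G_def)
  ultimately have diag: "((\<lambda>(l, i). F (i + 2 * l) l) has_sum S) (UNIV \<times> UNIV)" by simp
  have "((\<lambda>i. F (i + 2 * l) l) has_sum b l) UNIV" for l
  proof -
    have "(\<lambda>i. F (i + 2 * l) l) summable_on UNIV"
      using summable_on_SigmaD1[of "\<lambda>l i. F (i + 2 * l) l" UNIV "\<lambda>_. UNIV" l] diag
      by (auto dest: has_sum_imp_summable)
    then have "(\<lambda>i. F (i + 2 * l) l) sums infsum (\<lambda>i. F (i + 2 * l) l) UNIV"
      by (intro has_sum_imp_sums has_sum_infsum)
    with rows[of l] have "infsum (\<lambda>i. F (i + 2 * l) l) UNIV = b l" by (rule sums_unique2[symmetric])
    with \<open>(\<lambda>i. F (i + 2 * l) l) summable_on UNIV\<close> show ?thesis by (simp add: has_sum_iff)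
  qed
  then have "(b has_sum S) UNIV" by (intro has_sum_Sigma'[OF diag]) simp
  then have "b sums S" by (rule has_sum_imp_sums)
  with sums_S show "b sums (\<Sum>j. \<Sum>l\<le>j div 2. F j l)" by (simp add: sums_iff)
qed

text \<open>\<open>dist_sq \<rho> t = |\<rho> e - u|\<^sup>2\<close> for unit vectors \<open>e, u\<close> with \<open>\<langle>e, u\<rangle> = t\<close>.\<close>
definition dist_sq :: "real \<Rightarrow> real \<Rightarrow> real" where
  "dist_sq \<rho> t = 1 + \<rho>\<^sup>2 - 2 * \<rho> * t"

definition newton_kernel :: "real \<Rightarrow> real \<Rightarrow> real \<Rightarrow> real" where
  "newton_kernel m \<rho> t = dist_sq \<rho> t powr (- m)"

text \<open>The Taylor coefficients of \<open>newton_kernel m \<rho>\<close> at \<open>0\<close>, from the binomial series in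
  \<open>2 \<rho> t / (1 + \<rho>\<^sup>2)\<close>.\<close>
definition newton_coeff :: "real \<Rightarrow> real \<Rightarrow> nat \<Rightarrow> real" where
  "newton_coeff m \<rho> j = pochhammer m j / fact j * (2 * \<rho> / (1 + \<rho>\<^sup>2)) ^ j * (1 + \<rho>\<^sup>2) powr (- m)"

lemma dist_sq_pos:
  assumes "\<bar>\<rho>\<bar> < 1" "\<bar>t\<bar> \<le> 1"
  shows "dist_sq \<rho> t > 0"
proof -
  have "\<rho> * t \<le> \<bar>\<rho>\<bar>"
    using assms(2) abs_ge_self[of "\<rho> * t"] mult_left_le[of "\<bar>t\<bar>" "\<bar>\<rho>\<bar>"] by (simp add: abs_mult)
  moreover have "0 < (1 - \<bar>\<rho>\<bar>)\<^sup>2" using assms(1) by simp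
  ultimately show ?thesis unfolding dist_sq_def by (simp add: power2_eq_square algebra_simps)
qed

lemma newton_kernel_0 [simp]: "newton_kernel m 0 t = 1"
  by (simp add: newton_kernel_def dist_sq_def)

lemma double_over_one_plus_square_lt_1:
  fixes \<rho> :: real
  assumes "0 \<le> \<rho>" "\<rho> < 1"
  shows "2 * \<rho> / (1 + \<rho>\<^sup>2) < 1"
proof -
  have "0 < (1 - \<rho>)\<^sup>2" using assms by simp
  then show ?thesis by (simp add: power2_eq_square algebra_simps add_pos_nonneg)
qed

lemma pochhammer_nonneg_real: "0 \<le> (x::real) \<Longrightarrow> 0 \<le> pochhammer x n"
  by (cases "x = 0") (auto simp: pochhammer_0_left intro: pochhammer_nonneg)

lemma newton_coeff_nonneg: "0 \<le> m \<Longrightarrow> 0 \<le> \<rho> \<Longrightarrow> 0 \<le> newton_coeff m \<rho> j"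
  unfolding newton_coeff_def by (intro mult_nonneg_nonneg divide_nonneg_nonneg pochhammer_nonneg_real) auto

lemma summable_newton_coeff:
  assumes "0 \<le> m" "0 \<le> \<rho>" "\<rho> < 1"
  shows "summable (newton_coeff m \<rho>)"
proof -
  have "\<bar>2 * \<rho> / (1 + \<rho>\<^sup>2)\<bar> < 1"
    using double_over_one_plus_square_lt_1[OF assms(2,3)] assms(2) by simp
  from sums_mult2[OF pochhammer_binomial_series[OF this, of m], of "(1 + \<rho>\<^sup>2) powr (- m)"]
  show ?thesis unfolding newton_coeff_def by (rule sums_summable)
qed

lemma hypergeometric_coeff_eq:
  assumes "0 \<le> m"
  shows "pochhammer m (2 * l) / fact (2 * l) * even_moment_ratio (m - 1/2) l
    = pochhammer (m / 2) l * pochhammer ((m + 1) / 2) l / (pochhammer (m + 1/2) l * fact l)"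
proof -
  have "pochhammer m (2 * l) = 2 ^ (2 * l) * pochhammer (m / 2) l * pochhammer ((m + 1) / 2) l"
    using pochhammer_double[of "m / 2 :: real" l] by (simp add: add_divide_distrib)
  moreover have "fact (2 * l) = (2 ^ (2 * l) * pochhammer (1/2) l * fact l :: real)"
    by (rule fact_double)
  moreover have "pochhammer (1/2 :: real) l > 0" "pochhammer (m + 1/2) l > 0"
    using assms by (auto intro!: pochhammer_pos)
  ultimately show ?thesis by (simp add: even_moment_ratio_def field_simps)
qed

lemma sums_hyp2F1_mult:
  assumes "(\<lambda>l. pochhammer a l * pochhammer b l / (pochhammer c l * fact l) * z ^ l * K) sums S"
    and "K \<noteq> 0"
  shows "S = K * hyp2F1 a b c z"
proof -
  from sums_mult2[OF assms(1), of "1 / K"] assms(2)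
  have "(\<lambda>l. pochhammer a l * pochhammer b l / (pochhammer c l * fact l) * z ^ l) sums (S / K)" by simp
  then have "hyp2F1 a b c z = S / K" unfolding hyp2F1_def by (rule sums_unique[symmetric])
  with assms(2) show ?thesis by simp
qed

lemma newton_coeff_add_split:
  "newton_coeff m \<rho> (i + 2 * l) * real ((i + 2 * l) choose (2 * l))
    = (pochhammer m (2 * l) / fact (2 * l) * (2 * \<rho> / (1 + \<rho>\<^sup>2)) ^ (2 * l) * (1 + \<rho>\<^sup>2) powr (- m))
      * (pochhammer (m + real (2 * l)) i / fact i * (2 * \<rho> / (1 + \<rho>\<^sup>2)) ^ i)"
proof -
  have choose: "real ((i + 2 * l) choose (2 * l)) = fact (i + 2 * l) / (fact (2 * l) * fact i)"
    using binomial_fact[of "2 * l" "i + 2 * l", where 'a=real] by simp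
  have poch: "pochhammer m (i + 2 * l) = pochhammer m (2 * l) * pochhammer (m + real (2 * l)) i"
    using pochhammer_product'[of m "2 * l" i] by (simp add: add.commute)
  have "(fact (i + 2 * l) :: real) \<noteq> 0" by simp
  then show ?thesis
    unfolding newton_coeff_def choose poch by (simp add: field_simps power_add)
qed

lemma power_powr_regroup:
  fixes a r A y \<rho> m :: real
  assumes "a > 0" "r > 0" "A = a * r" "y = 2 * \<rho> / a"
  shows "y ^ (2 * l) * a powr (- m) * r powr (- (m + real (2 * l))) = (4 * \<rho>\<^sup>2 / A\<^sup>2) ^ l * A powr (- m)"
proof -
  have y: "y ^ (2 * l) = (2 * \<rho>) ^ (2 * l) / a ^ (2 * l)" by (simp add: assms(4) power_divide)
  have "r powr (- (m + real (2 * l))) = r powr (- m) * r powr (- real (2 * l))"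
    by (simp add: powr_add[symmetric])
  also have "r powr (- real (2 * l)) = 1 / r ^ (2 * l)"
    by (simp only: powr_minus powr_realpow[OF assms(2)] inverse_eq_divide)
  finally have r: "r powr (- (m + real (2 * l))) = r powr (- m) / r ^ (2 * l)" by simp
  have A: "A powr (- m) = a powr (- m) * r powr (- m)" using assms by (simp add: powr_mult)
  have "4 * \<rho>\<^sup>2 / A\<^sup>2 = (2 * \<rho>) ^ 2 / (a ^ 2 * r ^ 2)" using assms(3) by (simp add: power_mult_distrib)
  then have A2: "(4 * \<rho>\<^sup>2 / A\<^sup>2) ^ l = (2 * \<rho>) ^ (2 * l) / (a ^ (2 * l) * r ^ (2 * l))"
    by (simp only: power_divide power_mult_distrib power_mult)
  have "a ^ (2 * l) > 0" "r ^ (2 * l) > 0" using assms by auto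
  then show ?thesis unfolding y r A A2 by (simp add: field_simps)
qed

lemma newton_coeff_diagonal_term:
  fixes m \<rho> X V :: real
  defines "y \<equiv> 2 * \<rho> / (1 + \<rho>\<^sup>2)"
  shows "newton_coeff m \<rho> (i + 2 * l)
      * (real ((i + 2 * l) choose (2 * l)) * X ^ i * V ^ l * even_moment_ratio (m - 1/2) l)
    = (pochhammer m (2 * l) / fact (2 * l) * even_moment_ratio (m - 1/2) l) * V ^ l
      * (y ^ (2 * l) * (1 + \<rho>\<^sup>2) powr (- m)) * (pochhammer (m + real (2 * l)) i / fact i * (y * X) ^ i)"
proof -
  have "(pochhammer m (2 * l) / fact (2 * l) * even_moment_ratio (m - 1/2) l) * V ^ l
      * (y ^ (2 * l) * (1 + \<rho>\<^sup>2) powr (- m)) * (pochhammer (m + real (2 * l)) i / fact i * (y * X) ^ i)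
    = (pochhammer m (2 * l) / fact (2 * l) * y ^ (2 * l) * (1 + \<rho>\<^sup>2) powr (- m)
      * (pochhammer (m + real (2 * l)) i / fact i * y ^ i)) * (X ^ i * V ^ l * even_moment_ratio (m - 1/2) l)"
    by (simp add: power_mult_distrib mult_ac)
  also have "pochhammer m (2 * l) / fact (2 * l) * y ^ (2 * l) * (1 + \<rho>\<^sup>2) powr (- m)
      * (pochhammer (m + real (2 * l)) i / fact i * y ^ i)
    = newton_coeff m \<rho> (i + 2 * l) * real ((i + 2 * l) choose (2 * l))"
    unfolding y_def by (rule newton_coeff_add_split[symmetric])
  finally show ?thesis by (simp add: mult_ac)
qed

lemma newton_coeff_diagonal_sums:
  fixes X V :: real
  assumes m: "0 \<le> m" and \<rho>: "0 \<le> \<rho>" "\<rho> < 1" and X: "\<bar>X\<bar> \<le> 1"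
  shows "(\<lambda>i. newton_coeff m \<rho> (i + 2 * l)
      * (real ((i + 2 * l) choose (2 * l)) * X ^ i * V ^ l * even_moment_ratio (m - 1/2) l))
    sums (pochhammer (m / 2) l * pochhammer ((m + 1) / 2) l / (pochhammer (m + 1/2) l * fact l)
      * (4 * \<rho>\<^sup>2 * V / (dist_sq \<rho> X)\<^sup>2) ^ l * dist_sq \<rho> X powr (- m))"
proof -
  define a y r where "a = 1 + \<rho>\<^sup>2" and "y = 2 * \<rho> / a" and "r = 1 - y * X"
  have a: "a > 0" by (simp add: a_def add_pos_nonneg)
  have y: "0 \<le> y" "y < 1"
    using double_over_one_plus_square_lt_1[OF \<rho>] \<rho> a by (simp_all add: y_def a_def)
  have "\<bar>y * X\<bar> \<le> y" using y X by (simp add: abs_mult mult_left_le)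
  with y have yX: "\<bar>y * X\<bar> < 1" by simp
  then have r: "r > 0" by (simp add: r_def abs_less_iff)
  have A: "dist_sq \<rho> X = a * r" using a by (simp add: dist_sq_def a_def r_def y_def field_simps)
  define c where "c = (pochhammer m (2 * l) / fact (2 * l) * even_moment_ratio (m - 1/2) l) * V ^ l
    * (y ^ (2 * l) * a powr (- m))"
  have "(4 * \<rho>\<^sup>2 * V / (dist_sq \<rho> X)\<^sup>2) ^ l = V ^ l * (4 * \<rho>\<^sup>2 / (dist_sq \<rho> X)\<^sup>2) ^ l"
    by (metis power_mult_distrib times_divide_eq_left mult.commute)
  then have "(pochhammer m (2 * l) / fact (2 * l) * even_moment_ratio (m - 1/2) l) * V ^ l
      * (y ^ (2 * l) * a powr (- m) * r powr (- (m + real (2 * l))))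
    = pochhammer (m / 2) l * pochhammer ((m + 1) / 2) l / (pochhammer (m + 1/2) l * fact l)
      * (4 * \<rho>\<^sup>2 * V / (dist_sq \<rho> X)\<^sup>2) ^ l * dist_sq \<rho> X powr (- m)"
    unfolding hypergeometric_coeff_eq[OF m] power_powr_regroup[OF a r A y_def] by (simp add: mult_ac)
  then have c_value: "c * (1 - y * X) powr (- (m + real (2 * l)))
    = pochhammer (m / 2) l * pochhammer ((m + 1) / 2) l / (pochhammer (m + 1/2) l * fact l)
      * (4 * \<rho>\<^sup>2 * V / (dist_sq \<rho> X)\<^sup>2) ^ l * dist_sq \<rho> X powr (- m)"
    by (simp only: c_def r_def mult.assoc)
  from sums_mult[OF pochhammer_binomial_series[OF yX, of "m + real (2 * l)"], of c]
  have "(\<lambda>i. c * (pochhammer (m + real (2 * l)) i / fact i * (y * X) ^ i)) sums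
    (pochhammer (m / 2) l * pochhammer ((m + 1) / 2) l / (pochhammer (m + 1/2) l * fact l)
      * (4 * \<rho>\<^sup>2 * V / (dist_sq \<rho> X)\<^sup>2) ^ l * dist_sq \<rho> X powr (- m))"
    unfolding c_value .
  then show ?thesis unfolding newton_coeff_diagonal_term c_def y_def a_def .
qed

text \<open>Ordering the double series \<open>\<Sum>j \<Sum>l\<le>j div 2\<close> by \<open>l\<close> instead, each row is a binomial series
  and the row sums form the hypergeometric series.\<close>
lemma newton_kernel_mean_power_sums:
  assumes m: "0 \<le> m" and \<rho>: "0 \<le> \<rho>" "\<rho> < 1" and cs: "c\<^sup>2 + s\<^sup>2 = 1" and x: "x \<in> {-1..1}"
  shows "(\<lambda>j. newton_coeff m \<rho> j * mean_power (m - 1/2) c s j x) sums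
    (newton_kernel m \<rho> (c * x)
      * hyp2F1 (m / 2) ((m + 1) / 2) (m + 1/2) (4 * \<rho>\<^sup>2 * s\<^sup>2 * (1 - x\<^sup>2) / (dist_sq \<rho> (c * x))\<^sup>2))"
proof -
  define X V A where "X = c * x" and "V = s\<^sup>2 * (1 - x\<^sup>2)" and "A = dist_sq \<rho> X"
  define F where "F j l = newton_coeff m \<rho> j
    * (real (j choose (2 * l)) * X ^ (j - 2 * l) * V ^ l * even_moment_ratio (m - 1/2) l)" for j l
  define b where "b l = pochhammer (m / 2) l * pochhammer ((m + 1) / 2) l / (pochhammer (m + 1/2) l * fact l)
    * (4 * \<rho>\<^sup>2 * V / A\<^sup>2) ^ l * A powr (- m)" for l
  have "0 \<le> sqrt V" using one_minus_square_nonneg[OF x] by (simp add: V_def)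
  then have X: "\<bar>X\<bar> \<le> 1"
    using abs_mult_add_sqrt_le_1[OF cs x] unfolding X_def V_def by linarith
  have A: "A > 0" using dist_sq_pos[of \<rho> X] \<rho> X by (simp add: A_def)
  have terms: "(\<Sum>l\<le>j div 2. F j l) = newton_coeff m \<rho> j * mean_power (m - 1/2) c s j x" for j
    by (simp add: F_def mean_power_def X_def V_def sum_distrib_left)
  have "(\<Sum>l\<le>j div 2. \<bar>F j l\<bar>) \<le> newton_coeff m \<rho> j" for j
  proof -
    have "(\<Sum>l\<le>j div 2. \<bar>F j l\<bar>) = newton_coeff m \<rho> j * (\<Sum>l\<le>j div 2. \<bar>real (j choose (2 * l))
        * (c * x) ^ (j - 2 * l) * (s\<^sup>2 * (1 - x\<^sup>2)) ^ l * even_moment_ratio (m - 1/2) l\<bar>)"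
      using newton_coeff_nonneg[OF m \<rho>(1), of j]
      by (simp add: F_def X_def V_def sum_distrib_left abs_mult)
    also have "\<dots> \<le> newton_coeff m \<rho> j * 1"
      using m by (intro mult_left_mono mean_power_abs_terms_le_1 cs x newton_coeff_nonneg \<rho>) auto
    finally show ?thesis by simp
  qed
  then have "summable (\<lambda>j. \<Sum>l\<le>j div 2. \<bar>F j l\<bar>)"
    by (intro summable_comparison_test'[OF summable_newton_coeff[OF m \<rho>]]) simp
  moreover have "(\<lambda>i. F (i + 2 * l) l) sums b l" for l
    using newton_coeff_diagonal_sums[OF m \<rho> X, of l V] by (simp add: F_def b_def A_def)
  ultimately have "summable (\<lambda>j. \<Sum>l\<le>j div 2. F j l)" and b_sums: "b sums (\<Sum>j. \<Sum>l\<le>j div 2. F j l)"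
    by (rule sums_half_triangle_rows)+
  have "(\<Sum>j. \<Sum>l\<le>j div 2. F j l)
      = A powr (- m) * hyp2F1 (m / 2) ((m + 1) / 2) (m + 1/2) (4 * \<rho>\<^sup>2 * V / A\<^sup>2)"
    using A by (intro sums_hyp2F1_mult[OF b_sums[unfolded b_def]]) simp
  with summable_sums[OF \<open>summable (\<lambda>j. \<Sum>l\<le>j div 2. F j l)\<close>] show ?thesis
    unfolding terms[symmetric] by (simp add: newton_kernel_def A_def X_def V_def mult.assoc)
qed

section \<open>Term-by-term integration\<close>

lemma summable_newton_coeff_moments:
  assumes m: "1/2 \<le> m" and \<rho>: "0 \<le> \<rho>" "\<rho> < 1"
  shows "summable (\<lambda>j. newton_coeff m \<rho> j * (\<beta> * \<rho> * moment (m - 1/2) j - moment (m - 1/2) (j + 1)))"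
proof (rule summable_comparison_test'[OF summable_mult2[OF summable_newton_coeff[OF _ \<rho>]]])
  fix j
  have \<nu>: "0 \<le> m - 1/2" using m by simp
  have "\<bar>\<beta> * \<rho> * moment (m - 1/2) j\<bar> \<le> \<bar>\<beta> * \<rho>\<bar> * 2"
    using mult_left_mono[OF abs_moment_le[OF \<nu>, of j], of "\<bar>\<beta> * \<rho>\<bar>"] by (simp add: abs_mult)
  then have "\<bar>\<beta> * \<rho> * moment (m - 1/2) j - moment (m - 1/2) (j + 1)\<bar> \<le> \<bar>\<beta> * \<rho>\<bar> * 2 + 2"
    using abs_triangle_ineq4[of "\<beta> * \<rho> * moment (m - 1/2) j" "moment (m - 1/2) (j + 1)"]
      abs_moment_le[OF \<nu>, of "j + 1"] by linarith
  then show "norm (newton_coeff m \<rho> j * (\<beta> * \<rho> * moment (m - 1/2) j - moment (m - 1/2) (j + 1)))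
      \<le> newton_coeff m \<rho> j * (\<bar>\<beta> * \<rho>\<bar> * 2 + 2)"
    using newton_coeff_nonneg[of m \<rho> j] m \<rho> by (simp add: abs_mult mult_left_mono)
qed (use m in simp)

lemma has_integral_newton_kernel_partial_sum:
  assumes m: "1/2 \<le> m" and cs: "c\<^sup>2 + s\<^sup>2 = 1"
  shows "((\<lambda>x. (\<beta> * \<rho> * c - x) * gegenbauer_weight (m - 1/2) x
      * (\<Sum>j<N. newton_coeff m \<rho> j * mean_power (m - 1/2) c s j x)) has_integral
    c * (\<Sum>j<N. newton_coeff m \<rho> j * (\<beta> * \<rho> * moment (m - 1/2) j - moment (m - 1/2) (j + 1)))) {-1..1}"
proof -
  define \<nu> a where "\<nu> = m - 1/2" and "a = newton_coeff m \<rho>"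
  have "((\<lambda>x. \<Sum>j<N. a j * (\<beta> * \<rho> * c * (x ^ 0 * mean_power \<nu> c s j x * gegenbauer_weight \<nu> x)
      - x ^ 1 * mean_power \<nu> c s j x * gegenbauer_weight \<nu> x))
    has_integral (\<Sum>j<N. a j * (\<beta> * \<rho> * c * (c ^ 0 * moment \<nu> (j + 0)) - c ^ 1 * moment \<nu> (j + 1))))
    {-1..1}"
    using m cs unfolding \<nu>_def
    by (intro has_integral_sum has_integral_mult_right has_integral_diff has_integral_mean_power) auto
  moreover have "(\<Sum>j<N. a j * (\<beta> * \<rho> * c * (x ^ 0 * mean_power \<nu> c s j x * gegenbauer_weight \<nu> x)
      - x ^ 1 * mean_power \<nu> c s j x * gegenbauer_weight \<nu> x))
    = (\<beta> * \<rho> * c - x) * gegenbauer_weight \<nu> x * (\<Sum>j<N. a j * mean_power \<nu> c s j x)" for x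
    by (simp add: sum_distrib_left sum_distrib_right sum_subtractf algebra_simps)
  moreover have "(\<Sum>j<N. a j * (\<beta> * \<rho> * c * (c ^ 0 * moment \<nu> (j + 0)) - c ^ 1 * moment \<nu> (j + 1)))
      = c * (\<Sum>j<N. a j * (\<beta> * \<rho> * moment \<nu> j - moment \<nu> (j + 1)))"
    by (simp add: sum_distrib_left algebra_simps)
  ultimately show ?thesis by (simp add: \<nu>_def a_def)
qed

lemma abs_newton_kernel_partial_sum_le:
  assumes m: "1/2 \<le> m" and \<rho>: "0 \<le> \<rho>" "\<rho> < 1" and cs: "c\<^sup>2 + s\<^sup>2 = 1" and x: "x \<in> {-1..1}"
  shows "\<bar>\<Sum>j<N. newton_coeff m \<rho> j * mean_power (m - 1/2) c s j x\<bar> \<le> (\<Sum>j. newton_coeff m \<rho> j)"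
proof -
  have "\<bar>\<Sum>j<N. newton_coeff m \<rho> j * mean_power (m - 1/2) c s j x\<bar> \<le> (\<Sum>j<N. newton_coeff m \<rho> j)"
  proof (rule order_trans[OF sum_abs sum_mono])
    fix j
    have "\<bar>mean_power (m - 1/2) c s j x\<bar> \<le> 1" using m cs x by (intro abs_mean_power_le_1) auto
    then show "\<bar>newton_coeff m \<rho> j * mean_power (m - 1/2) c s j x\<bar> \<le> newton_coeff m \<rho> j"
      using newton_coeff_nonneg[of m \<rho> j] m \<rho> by (simp add: abs_mult mult_left_le)
  qed
  also have "\<dots> \<le> (\<Sum>j. newton_coeff m \<rho> j)"
    using summable_newton_coeff[of m \<rho>] newton_coeff_nonneg[of m \<rho>] m \<rho> by (intro sum_le_suminf) auto
  finally show ?thesis .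
qed

text \<open>By \<open>has_integral_mean_power\<close>, the angle enters only through the factor \<open>c\<close>.\<close>
lemma has_integral_newton_kernel_series:
  assumes m: "1/2 \<le> m" and \<rho>: "0 \<le> \<rho>" "\<rho> < 1" and cs: "c\<^sup>2 + s\<^sup>2 = 1"
  shows "((\<lambda>x. (\<beta> * \<rho> * c - x) * gegenbauer_weight (m - 1/2) x * newton_kernel m \<rho> (c * x)
      * hyp2F1 (m / 2) ((m + 1) / 2) (m + 1/2) (4 * \<rho>\<^sup>2 * s\<^sup>2 * (1 - x\<^sup>2) / (dist_sq \<rho> (c * x))\<^sup>2))
    has_integral c * (\<Sum>j. newton_coeff m \<rho> j
      * (\<beta> * \<rho> * moment (m - 1/2) j - moment (m - 1/2) (j + 1)))) {-1..1}"
    (is "(?f has_integral c * suminf ?t) _")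
proof -
  define g where "g N x = (\<beta> * \<rho> * c - x) * gegenbauer_weight (m - 1/2) x
    * (\<Sum>j<N. newton_coeff m \<rho> j * mean_power (m - 1/2) c s j x)" for N x
  define K where "K = (\<bar>\<beta> * \<rho> * c\<bar> + 1) * (\<Sum>j. newton_coeff m \<rho> j)"
  have int_g: "(g N has_integral c * (\<Sum>j<N. ?t j)) {-1..1}" for N
    unfolding g_def by (rule has_integral_newton_kernel_partial_sum[OF m cs])
  have bound: "norm (g N x) \<le> K" if x: "x \<in> {-1..1}" for N x
  proof -
    have "\<bar>\<beta> * \<rho> * c - x\<bar> \<le> \<bar>\<beta> * \<rho> * c\<bar> + 1" using x by auto
    moreover have "\<bar>gegenbauer_weight (m - 1/2) x\<bar> \<le> 1"
      using gegenbauer_weight_le_1[OF x] gegenbauer_weight_nonneg[of "m - 1/2" x] m by simp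
    moreover note abs_newton_kernel_partial_sum_le[OF m \<rho> cs x, of N]
    ultimately have "\<bar>\<beta> * \<rho> * c - x\<bar> * \<bar>gegenbauer_weight (m - 1/2) x\<bar>
        * \<bar>\<Sum>j<N. newton_coeff m \<rho> j * mean_power (m - 1/2) c s j x\<bar>
      \<le> (\<bar>\<beta> * \<rho> * c\<bar> + 1) * 1 * (\<Sum>j. newton_coeff m \<rho> j)"
      by (intro mult_mono) auto
    then show ?thesis by (simp add: g_def K_def abs_mult)
  qed
  have conv: "(\<lambda>N. g N x) \<longlonglongrightarrow> ?f x" if x: "x \<in> {-1..1}" for x
  proof -
    have "0 \<le> m" using m by simp
    from tendsto_mult_left[OF newton_kernel_mean_power_sums[OF this \<rho> cs x, unfolded sums_def],
        of "(\<beta> * \<rho> * c - x) * gegenbauer_weight (m - 1/2) x"]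
    show ?thesis by (simp add: g_def mult.assoc)
  qed
  have gint: "g N integrable_on {-1..1}" for N using int_g by blast
  have Kint: "(\<lambda>x. K) integrable_on {-1..1::real}" by (rule integrable_const_ivl)
  have "(\<lambda>N. integral {-1..1} (g N)) \<longlonglongrightarrow> integral {-1..1} ?f"
    by (rule dominated_convergence(2)[OF gint Kint bound conv])
  moreover have "(\<lambda>N. integral {-1..1} (g N)) \<longlonglongrightarrow> c * suminf ?t"
    unfolding integral_unique[OF int_g]
    using summable_LIMSEQ[OF summable_newton_coeff_moments[OF m \<rho>]] by (rule tendsto_mult_left)
  ultimately have "integral {-1..1} ?f = c * suminf ?t" by (rule LIMSEQ_unique)
  with integrable_integral[OF dominated_convergence(1)[OF gint Kint bound conv]] show ?thesis
    by simp
qed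

section \<open>Harmonicity of the Newtonian potential\<close>

lemma continuous_on_fix_fst:
  fixes f :: "real \<Rightarrow> real \<Rightarrow> real"
  assumes "continuous_on (U \<times> V) (\<lambda>p. f (fst p) (snd p))" "\<rho> \<in> U"
  shows "continuous_on V (f \<rho>)"
proof -
  have "continuous_on V (\<lambda>x. (\<lambda>p. f (fst p) (snd p)) (\<rho>, x))"
    by (rule continuous_on_compose2[OF assms(1)]) (use assms(2) in \<open>auto intro!: continuous_intros\<close>)
  then show ?thesis by simp
qed

lemma has_real_derivative_integral_param:
  fixes f f' :: "real \<Rightarrow> real \<Rightarrow> real"
  assumes U: "open U" "convex U" "\<rho> \<in> U"
    and der: "\<And>\<rho> x. \<rho> \<in> U \<Longrightarrow> x \<in> {a..b} \<Longrightarrow> ((\<lambda>\<rho>. f \<rho> x) has_real_derivative f' \<rho> x) (at \<rho>)"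
    and cont: "continuous_on (U \<times> {a..b}) (\<lambda>p. f (fst p) (snd p))"
    and cont': "continuous_on (U \<times> {a..b}) (\<lambda>p. f' (fst p) (snd p))"
  shows "((\<lambda>\<rho>. integral {a..b} (f \<rho>)) has_real_derivative integral {a..b} (f' \<rho>)) (at \<rho>)"
proof -
  have "((\<lambda>\<rho>. integral (cbox a b) (f \<rho>)) has_field_derivative integral (cbox a b) (f' \<rho>)) (at \<rho> within U)"
  proof (rule leibniz_rule_field_derivative)
    show "((\<lambda>\<rho>. f \<rho> x) has_field_derivative f' \<rho> x) (at \<rho> within U)"
      if "\<rho> \<in> U" "x \<in> cbox a b" for \<rho> x
      using der that by (auto intro: has_field_derivative_at_within)
    show "f \<rho> integrable_on cbox a b" if "\<rho> \<in> U" for \<rho>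
      using continuous_on_fix_fst[OF cont that] by (simp add: integrable_continuous_interval)
    show "continuous_on (U \<times> cbox a b) (\<lambda>(\<rho>, x). f' \<rho> x)"
      using cont' by (simp add: case_prod_beta)
  qed (use U in auto)
  then show ?thesis using at_within_open[OF U(3,1)] by simp
qed

definition newton_kernel_deriv :: "real \<Rightarrow> real \<Rightarrow> real \<Rightarrow> real" where
  "newton_kernel_deriv m \<rho> t = - m * dist_sq \<rho> t powr (- m - 1) * (2 * \<rho> - 2 * t)"

definition newton_kernel_deriv2 :: "real \<Rightarrow> real \<Rightarrow> real \<Rightarrow> real" where
  "newton_kernel_deriv2 m \<rho> t = - m * ((- m - 1) * dist_sq \<rho> t powr (- m - 2) * (2 * \<rho> - 2 * t)\<^sup>2
     + 2 * dist_sq \<rho> t powr (- m - 1))"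

lemma has_real_derivative_dist_sq_powr:
  assumes "dist_sq \<rho> t > 0"
  shows "((\<lambda>\<rho>. dist_sq \<rho> t powr q) has_real_derivative q * dist_sq \<rho> t powr (q - 1) * (2 * \<rho> - 2 * t)) (at \<rho>)"
proof -
  have "((\<lambda>\<rho>. dist_sq \<rho> t) has_real_derivative 2 * \<rho> - 2 * t) (at \<rho>)"
    unfolding dist_sq_def by (auto intro!: derivative_eq_intros simp: power2_eq_square)
  from DERIV_fun_powr[OF this assms, of q] show ?thesis by simp
qed

lemma has_real_derivative_newton_kernel:
  assumes "dist_sq \<rho> t > 0"
  shows "((\<lambda>\<rho>. newton_kernel m \<rho> t) has_real_derivative newton_kernel_deriv m \<rho> t) (at \<rho>)"
  using has_real_derivative_dist_sq_powr[OF assms, of "- m"]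
  by (simp add: newton_kernel_def newton_kernel_deriv_def)

lemma has_real_derivative_newton_kernel_deriv:
  assumes "dist_sq \<rho> t > 0"
  shows "((\<lambda>\<rho>. newton_kernel_deriv m \<rho> t) has_real_derivative newton_kernel_deriv2 m \<rho> t) (at \<rho>)"
proof -
  have "((\<lambda>\<rho>. dist_sq \<rho> t powr (- m - 1) * (2 * \<rho> - 2 * t)) has_real_derivative
      (- m - 1) * dist_sq \<rho> t powr (- m - 2) * (2 * \<rho> - 2 * t) * (2 * \<rho> - 2 * t)
      + dist_sq \<rho> t powr (- m - 1) * 2) (at \<rho>)"
  proof (rule DERIV_mult'[THEN DERIV_cong])
    have "- m - 1 - 1 = - m - 2" by simp
    with has_real_derivative_dist_sq_powr[OF assms, of "- m - 1"]
    show "((\<lambda>\<rho>. dist_sq \<rho> t powr (- m - 1)) has_real_derivative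
        (- m - 1) * dist_sq \<rho> t powr (- m - 2) * (2 * \<rho> - 2 * t)) (at \<rho>)" by simp
    show "((\<lambda>\<rho>. 2 * \<rho> - 2 * t) has_real_derivative 2) (at \<rho>)"
      by (auto intro!: derivative_eq_intros)
  qed (simp add: algebra_simps)
  from DERIV_cmult[OF this, of "- m"] show ?thesis
    by (simp add: newton_kernel_deriv_def newton_kernel_deriv2_def power2_eq_square algebra_simps)
qed

lemma continuous_on_dist_sq_powr:
  "continuous_on ({-1<..<1} \<times> {-1..1}) (\<lambda>p. dist_sq (fst p) (snd p) powr q)"
proof (rule continuous_on_powr)
  show "\<forall>p\<in>{-1<..<1} \<times> {-1..1}. dist_sq (fst p) (snd p) \<noteq> 0"
    using dist_sq_pos by (force simp: abs_less_iff abs_le_iff)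
qed (auto simp: dist_sq_def intro!: continuous_intros)

lemma
  assumes "continuous_on {-1..1} h"
  shows continuous_on_weighted_newton_kernel:
      "continuous_on ({-1<..<1} \<times> {-1..1}) (\<lambda>p. h (snd p) * newton_kernel m (fst p) (snd p))"
    and continuous_on_weighted_newton_kernel_deriv:
      "continuous_on ({-1<..<1} \<times> {-1..1}) (\<lambda>p. h (snd p) * newton_kernel_deriv m (fst p) (snd p))"
    and continuous_on_weighted_newton_kernel_deriv2:
      "continuous_on ({-1<..<1} \<times> {-1..1}) (\<lambda>p. h (snd p) * newton_kernel_deriv2 m (fst p) (snd p))"
proof -
  have h: "continuous_on ({-1<..<1} \<times> {-1..1}) (\<lambda>p::real \<times> real. h (snd p))"
    by (rule continuous_on_compose2[OF assms continuous_on_snd]) auto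
  show "continuous_on ({-1<..<1} \<times> {-1..1}) (\<lambda>p. h (snd p) * newton_kernel m (fst p) (snd p))"
    "continuous_on ({-1<..<1} \<times> {-1..1}) (\<lambda>p. h (snd p) * newton_kernel_deriv m (fst p) (snd p))"
    "continuous_on ({-1<..<1} \<times> {-1..1}) (\<lambda>p. h (snd p) * newton_kernel_deriv2 m (fst p) (snd p))"
    unfolding newton_kernel_def newton_kernel_deriv_def newton_kernel_deriv2_def
    by (intro continuous_intros h continuous_on_dist_sq_powr)+
qed

lemma has_real_derivative_dist_sq_powr_right:
  assumes "dist_sq \<rho> x > 0"
  shows "((\<lambda>x. dist_sq \<rho> x powr q) has_real_derivative q * dist_sq \<rho> x powr (q - 1) * (- 2 * \<rho>)) (at x)"
proof -
  have "((\<lambda>x. dist_sq \<rho> x) has_real_derivative - 2 * \<rho>) (at x)"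
    unfolding dist_sq_def by (auto intro!: derivative_eq_intros)
  from DERIV_fun_powr[OF this assms, of q] show ?thesis by simp
qed

lemma continuous_on_dist_sq_powr_right:
  "\<bar>\<rho>\<bar> < 1 \<Longrightarrow> continuous_on {-1..1} (\<lambda>x. dist_sq \<rho> x powr q)"
  using continuous_on_fix_fst[OF continuous_on_dist_sq_powr, of \<rho>] by (simp add: abs_less_iff)

text \<open>With \<open>n = 2 m + 2\<close>, this is Laplace's equation for the Newtonian potential
  \<open>|y - \<rho> e|^(2 - n)\<close> at a unit vector \<open>y\<close> with \<open>\<langle>y, e\<rangle> = x\<close>, multiplied by \<open>\<rho>\<^sup>2\<close>: the radial part
  \<open>\<rho>\<^sup>2 \<partial>\<^sub>\<rho>\<^sub>\<rho> + (n - 1) \<rho> \<partial>\<^sub>\<rho>\<close> plus the spherical Laplacian on zonal functions,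
  \<open>(1 - x\<^sup>2) powr (1/2 - m) \<partial>\<^sub>x ((1 - x\<^sup>2) powr (m + 1/2) \<partial>\<^sub>x)\<close>.\<close>
lemma newton_kernel_laplace_eq:
  assumes x: "x \<in> {-1<..<1}" and D: "dist_sq \<rho> x > 0"
  shows "((\<lambda>x. (1 - x\<^sup>2) powr (m + 1/2) * (2 * m * \<rho> * dist_sq \<rho> x powr (- m - 1))) has_real_derivative
    - ((1 - x\<^sup>2) powr (m - 1/2) * (\<rho>\<^sup>2 * newton_kernel_deriv2 m \<rho> x
      + (2 * m + 1) * \<rho> * newton_kernel_deriv m \<rho> x))) (at x)"
proof (rule DERIV_cong)
  have "m + 1/2 - 1 = m - 1/2" "- m - 1 - 1 = - m - 2" by simp_all
  then show "((\<lambda>x. (1 - x\<^sup>2) powr (m + 1/2) * (2 * m * \<rho> * dist_sq \<rho> x powr (- m - 1))) has_real_derivative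
      (1 - x\<^sup>2) powr (m + 1/2) * (2 * m * \<rho> * ((- m - 1) * dist_sq \<rho> x powr (- m - 2) * (- 2 * \<rho>)))
      + (m + 1/2) * (1 - x\<^sup>2) powr (m - 1/2) * (- 2 * x) * (2 * m * \<rho> * dist_sq \<rho> x powr (- m - 1))) (at x)"
    using DERIV_mult'[OF has_real_derivative_one_minus_square_powr[OF x, of "m + 1/2"]
      DERIV_cmult[OF has_real_derivative_dist_sq_powr_right[OF D, of "- m - 1"], of "2 * m * \<rho>"]]
    by (simp only:)
  define P Z where "P = (1 - x\<^sup>2) powr (m - 1/2)" and "Z = dist_sq \<rho> x powr (- m - 2)"
  have W: "(1 - x\<^sup>2) powr (m + 1/2) = P * (1 - x\<^sup>2)"
    using one_minus_square_pos[OF x] powr_add[of "1 - x\<^sup>2" "m - 1/2" 1] by (simp add: P_def add.commute)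
  have D1: "dist_sq \<rho> x powr (- m - 1) = Z * dist_sq \<rho> x"
  proof -
    have "- m - 1 = (- m - 2) + 1" by simp
    then have "dist_sq \<rho> x powr (- m - 1) = dist_sq \<rho> x powr (- m - 2) * dist_sq \<rho> x powr 1"
      by (simp only: powr_add)
    then show ?thesis using D by (simp add: Z_def)
  qed
  show "(1 - x\<^sup>2) powr (m + 1/2) * (2 * m * \<rho> * ((- m - 1) * dist_sq \<rho> x powr (- m - 2) * (- 2 * \<rho>)))
      + (m + 1/2) * (1 - x\<^sup>2) powr (m - 1/2) * (- 2 * x) * (2 * m * \<rho> * dist_sq \<rho> x powr (- m - 1))
    = - ((1 - x\<^sup>2) powr (m - 1/2) * (\<rho>\<^sup>2 * newton_kernel_deriv2 m \<rho> x
      + (2 * m + 1) * \<rho> * newton_kernel_deriv m \<rho> x))"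
    unfolding newton_kernel_deriv_def newton_kernel_deriv2_def W D1 P_def[symmetric] Z_def[symmetric]
    by (simp add: dist_sq_def algebra_simps power2_eq_square)
qed

lemma has_real_derivative_weighted_newton_kernel:
  assumes x: "x \<in> {-1<..<1}" and D: "dist_sq \<rho> x > 0"
  shows "((\<lambda>x. (1 - x\<^sup>2) powr (m + 1/2) * newton_kernel m \<rho> x) has_real_derivative
    (1 - x\<^sup>2) powr (m + 1/2) * (2 * m * \<rho> * dist_sq \<rho> x powr (- m - 1))
    - (2 * m + 1) * x * (1 - x\<^sup>2) powr (m - 1/2) * newton_kernel m \<rho> x) (at x)"
proof -
  have "m + 1/2 - 1 = m - 1/2" by simp
  then have "((\<lambda>x. (1 - x\<^sup>2) powr (m + 1/2) * newton_kernel m \<rho> x) has_real_derivative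
      (1 - x\<^sup>2) powr (m + 1/2) * (- m * dist_sq \<rho> x powr (- m - 1) * (- 2 * \<rho>))
      + (m + 1/2) * (1 - x\<^sup>2) powr (m - 1/2) * (- 2 * x) * newton_kernel m \<rho> x) (at x)"
    using has_real_derivative_one_minus_square_powr[OF x, of "m + 1/2"]
      has_real_derivative_dist_sq_powr_right[OF D, of "- m"]
    unfolding newton_kernel_def by (intro DERIV_mult') simp_all
  then show ?thesis by (simp add: algebra_simps)
qed

lemma has_integral_laplace_weight:
  assumes m: "1/2 \<le> m" and \<rho>: "\<bar>\<rho>\<bar> < 1"
  shows "((\<lambda>x. gegenbauer_weight (m - 1/2) x * (\<rho>\<^sup>2 * newton_kernel_deriv2 m \<rho> x
      + (2 * m + 1) * \<rho> * newton_kernel_deriv m \<rho> x)) has_integral 0) {-1..1}"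
    (is "(?g has_integral 0) _")
proof -
  define F where "F x = - ((1 - x\<^sup>2) powr (m + 1/2) * (2 * m * \<rho> * dist_sq \<rho> x powr (- m - 1)))" for x
  have "(F has_vector_derivative gegenbauer_weight (m - 1/2) x * (\<rho>\<^sup>2 * newton_kernel_deriv2 m \<rho> x
      + (2 * m + 1) * \<rho> * newton_kernel_deriv m \<rho> x)) (at x)" if x: "x \<in> {-1<..<1}" for x
  proof -
    have "\<bar>x\<bar> \<le> 1" using x by auto
    from DERIV_minus[OF newton_kernel_laplace_eq[OF x dist_sq_pos[OF \<rho> this], of m]] x show ?thesis
      unfolding F_def by (simp add: gegenbauer_weight_eq has_real_derivative_iff_has_vector_derivative)
  qed
  moreover have "continuous_on {-1..1} F"
    unfolding F_def using m \<rho>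
    by (intro continuous_intros continuous_on_one_minus_square_powr continuous_on_dist_sq_powr_right) auto
  ultimately have "(?g has_integral F 1 - F (-1)) {-1..1}"
    by (intro fundamental_theorem_of_calculus_interior) auto
  moreover have "F 1 - F (-1) = 0" using m by (simp add: F_def)
  ultimately show ?thesis by simp
qed

lemma has_real_derivative_laplace_x_antiderivative:
  assumes x: "x \<in> {-1<..<1}" and D: "dist_sq \<rho> x > 0"
  shows "((\<lambda>x. (1 - x\<^sup>2) powr (m + 1/2) * newton_kernel m \<rho> x
      - x * ((1 - x\<^sup>2) powr (m + 1/2) * (2 * m * \<rho> * dist_sq \<rho> x powr (- m - 1)))) has_real_derivative
    x * (1 - x\<^sup>2) powr (m - 1/2) * (\<rho>\<^sup>2 * newton_kernel_deriv2 m \<rho> x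
      + (2 * m + 1) * \<rho> * newton_kernel_deriv m \<rho> x - (2 * m + 1) * newton_kernel m \<rho> x)) (at x)"
proof -
  define Q where "Q x = (1 - x\<^sup>2) powr (m + 1/2) * (2 * m * \<rho> * dist_sq \<rho> x powr (- m - 1))" for x
  define w S where "w = (1 - x\<^sup>2) powr (m - 1/2)"
    and "S = \<rho>\<^sup>2 * newton_kernel_deriv2 m \<rho> x + (2 * m + 1) * \<rho> * newton_kernel_deriv m \<rho> x"
  have "(Q has_real_derivative - (w * S)) (at x)"
    unfolding Q_def w_def S_def by (rule newton_kernel_laplace_eq[OF x D])
  from DERIV_diff[OF has_real_derivative_weighted_newton_kernel[OF x D, of m] DERIV_mult'[OF DERIV_ident this]]
  have "((\<lambda>x. (1 - x\<^sup>2) powr (m + 1/2) * newton_kernel m \<rho> x - x * Q x) has_real_derivative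
      Q x - (2 * m + 1) * x * w * newton_kernel m \<rho> x - (x * - (w * S) + 1 * Q x)) (at x)"
    by (simp only: Q_def w_def)
  moreover have "Q x - (2 * m + 1) * x * w * newton_kernel m \<rho> x - (x * - (w * S) + 1 * Q x)
      = x * w * (S - (2 * m + 1) * newton_kernel m \<rho> x)"
    by (simp add: algebra_simps)
  ultimately show ?thesis unfolding Q_def w_def S_def by simp
qed

lemma has_integral_laplace_x_weight:
  assumes m: "1/2 \<le> m" and \<rho>: "\<bar>\<rho>\<bar> < 1"
  shows "((\<lambda>x. x * gegenbauer_weight (m - 1/2) x * (\<rho>\<^sup>2 * newton_kernel_deriv2 m \<rho> x
      + (2 * m + 1) * \<rho> * newton_kernel_deriv m \<rho> x - (2 * m + 1) * newton_kernel m \<rho> x)) has_integral 0)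
    {-1..1}" (is "(?g has_integral 0) _")
proof -
  define F where "F x = (1 - x\<^sup>2) powr (m + 1/2) * newton_kernel m \<rho> x
    - x * ((1 - x\<^sup>2) powr (m + 1/2) * (2 * m * \<rho> * dist_sq \<rho> x powr (- m - 1)))" for x
  have "(F has_vector_derivative ?g x) (at x)" if x: "x \<in> {-1<..<1}" for x
  proof -
    have "\<bar>x\<bar> \<le> 1" using x by auto
    from has_real_derivative_laplace_x_antiderivative[OF x dist_sq_pos[OF \<rho> this], of m] x show ?thesis
      unfolding F_def by (simp add: gegenbauer_weight_eq has_real_derivative_iff_has_vector_derivative)
  qed
  moreover have "continuous_on {-1..1} F"
  proof -
    have "continuous_on {-1..1} (\<lambda>x::real. (1 - x\<^sup>2) powr (m + 1/2))"
      using m by (intro continuous_on_one_minus_square_powr) simp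
    with continuous_on_dist_sq_powr_right[OF \<rho>] show ?thesis
      unfolding F_def newton_kernel_def
      by (intro continuous_on_diff continuous_on_mult continuous_on_const continuous_on_id) auto
  qed
  ultimately have "(?g has_integral F 1 - F (-1)) {-1..1}"
    by (intro fundamental_theorem_of_calculus_interior) auto
  moreover have "F 1 - F (-1) = 0" using m by (simp add: F_def)
  ultimately show ?thesis by simp
qed

lemma integrable_weighted_newton_kernels:
  assumes h: "continuous_on {-1..1} h" and \<rho>: "\<bar>\<rho>\<bar> < 1"
  shows "(\<lambda>x. h x * newton_kernel m \<rho> x) integrable_on {-1..1}"
    and "(\<lambda>x. h x * newton_kernel_deriv m \<rho> x) integrable_on {-1..1}"
    and "(\<lambda>x. h x * newton_kernel_deriv2 m \<rho> x) integrable_on {-1..1}"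
proof -
  have "\<rho> \<in> {-1<..<1}" using \<rho> by auto
  then show "(\<lambda>x. h x * newton_kernel m \<rho> x) integrable_on {-1..1}"
    and "(\<lambda>x. h x * newton_kernel_deriv m \<rho> x) integrable_on {-1..1}"
    and "(\<lambda>x. h x * newton_kernel_deriv2 m \<rho> x) integrable_on {-1..1}"
    using continuous_on_fix_fst[OF continuous_on_weighted_newton_kernel[OF h]]
      continuous_on_fix_fst[OF continuous_on_weighted_newton_kernel_deriv[OF h]]
      continuous_on_fix_fst[OF continuous_on_weighted_newton_kernel_deriv2[OF h]]
    by (auto intro: integrable_continuous_interval)
qed

lemma
  assumes h: "continuous_on {-1..1} h" and \<rho>: "\<bar>\<rho>\<bar> < 1"
  shows has_real_derivative_newton_potential:
      "((\<lambda>r. integral {-1..1} (\<lambda>x. h x * newton_kernel m r x)) has_real_derivative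
        integral {-1..1} (\<lambda>x. h x * newton_kernel_deriv m \<rho> x)) (at \<rho>)"
    and has_real_derivative_newton_potential_deriv:
      "((\<lambda>r. integral {-1..1} (\<lambda>x. h x * newton_kernel_deriv m r x)) has_real_derivative
        integral {-1..1} (\<lambda>x. h x * newton_kernel_deriv2 m \<rho> x)) (at \<rho>)"
proof -
  have U: "open {-1<..<1::real}" "convex {-1<..<1::real}" "\<rho> \<in> {-1<..<1}" using \<rho> by auto
  have D: "dist_sq r x > 0" if "r \<in> {-1<..<1}" "x \<in> {-1..1}" for r x
    using that by (intro dist_sq_pos) auto
  show "((\<lambda>r. integral {-1..1} (\<lambda>x. h x * newton_kernel m r x)) has_real_derivative
      integral {-1..1} (\<lambda>x. h x * newton_kernel_deriv m \<rho> x)) (at \<rho>)"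
    using has_real_derivative_integral_param[OF U, of "-1" 1 "\<lambda>r x. h x * newton_kernel m r x"
        "\<lambda>r x. h x * newton_kernel_deriv m r x"]
      DERIV_cmult[OF has_real_derivative_newton_kernel[OF D]]
      continuous_on_weighted_newton_kernel[OF h] continuous_on_weighted_newton_kernel_deriv[OF h]
    by blast
  show "((\<lambda>r. integral {-1..1} (\<lambda>x. h x * newton_kernel_deriv m r x)) has_real_derivative
      integral {-1..1} (\<lambda>x. h x * newton_kernel_deriv2 m \<rho> x)) (at \<rho>)"
    using has_real_derivative_integral_param[OF U, of "-1" 1 "\<lambda>r x. h x * newton_kernel_deriv m r x"
        "\<lambda>r x. h x * newton_kernel_deriv2 m r x"]
      DERIV_cmult[OF has_real_derivative_newton_kernel_deriv[OF D]]
      continuous_on_weighted_newton_kernel_deriv[OF h] continuous_on_weighted_newton_kernel_deriv2[OF h]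
    by blast
qed

section \<open>The axial case\<close>

lemma eq_at_0_of_deriv_zero:
  fixes f f' :: "real \<Rightarrow> real"
  assumes deriv: "\<And>t. 0 \<le> t \<Longrightarrow> t < R \<Longrightarrow> (f has_real_derivative f' t) (at t)"
    and zero: "\<And>t. 0 < t \<Longrightarrow> t < R \<Longrightarrow> f' t = 0"
    and r: "0 \<le> r" "r < R"
  shows "f r = f 0"
proof (cases "r = 0")
  case False
  have "continuous_on {0..r} f"
    using r deriv DERIV_isCont by (intro continuous_at_imp_continuous_on) force
  moreover have "(f has_real_derivative 0) (at t)" if "0 < t" "t < r" for t
    using deriv[of t] zero[of t] that r by simp
  ultimately show ?thesis using False r by (intro DERIV_isconst2[of 0 r]) auto
qed simp

text \<open>The integrating factor \<open>t powr k\<close> turns \<open>t g' + k g = 0\<close> into \<open>(t powr k * g)' = 0\<close>.\<close>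
lemma euler_first_order_vanishes:
  fixes g g' :: "real \<Rightarrow> real"
  assumes k: "0 < k"
    and deriv: "\<And>t. 0 \<le> t \<Longrightarrow> t < R \<Longrightarrow> (g has_real_derivative g' t) (at t)"
    and ode: "\<And>t. 0 < t \<Longrightarrow> t < R \<Longrightarrow> t * g' t + k * g t = 0"
    and r: "0 < r" "r < R"
  shows "g r = 0"
proof -
  define H where "H t = t powr k * g t" for t
  have "continuous_on {0..r} g"
    using r deriv DERIV_isCont by (intro continuous_at_imp_continuous_on) force
  then have "continuous_on {0..r} H"
    unfolding H_def using k by (intro continuous_intros continuous_on_powr') auto
  moreover have "(H has_real_derivative 0) (at t)" if t: "0 < t" "t < r" for t
  proof -
    have "(H has_real_derivative k * t powr (k - 1) * g t + t powr k * g' t) (at t)"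
      unfolding H_def using t r deriv[of t]
      by (auto intro!: derivative_eq_intros simp: algebra_simps)
    moreover have "k * t powr (k - 1) * g t + t powr k * g' t = t powr (k - 1) * (t * g' t + k * g t)"
      using t by (simp add: powr_diff algebra_simps)
    ultimately show ?thesis using ode[of t] t r by simp
  qed
  ultimately have "H r = H 0" using r by (intro DERIV_isconst2[of 0 r]) auto
  then show ?thesis using k r by (simp add: H_def)
qed

lemma euler_ode_const:
  fixes f f' f'' :: "real \<Rightarrow> real"
  assumes k: "0 < k"
    and d1: "\<And>t. 0 \<le> t \<Longrightarrow> t < R \<Longrightarrow> (f has_real_derivative f' t) (at t)"
    and d2: "\<And>t. 0 \<le> t \<Longrightarrow> t < R \<Longrightarrow> (f' has_real_derivative f'' t) (at t)"
    and ode: "\<And>t. 0 < t \<Longrightarrow> t < R \<Longrightarrow> t\<^sup>2 * f'' t + k * t * f' t = 0"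
    and r: "0 \<le> r" "r < R"
  shows "f r = f 0"
proof (rule eq_at_0_of_deriv_zero[OF d1 _ r])
  fix t assume t: "0 < t" "t < R"
  show "f' t = 0"
  proof (rule euler_first_order_vanishes[OF k d2 _ t])
    fix s assume s: "0 < s" "s < R"
    then have "s * (s * f'' s + k * f' s) = 0" using ode[of s] by (simp add: power2_eq_square algebra_simps)
    with s show "s * f'' s + k * f' s = 0" by simp
  qed
qed

lemma euler_ode_linear:
  fixes f f' f'' :: "real \<Rightarrow> real"
  assumes k: "0 < k"
    and d1: "\<And>t. 0 \<le> t \<Longrightarrow> t < R \<Longrightarrow> (f has_real_derivative f' t) (at t)"
    and d2: "\<And>t. 0 \<le> t \<Longrightarrow> t < R \<Longrightarrow> (f' has_real_derivative f'' t) (at t)"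
    and ode: "\<And>t. 0 \<le> t \<Longrightarrow> t < R \<Longrightarrow> t\<^sup>2 * f'' t + k * t * f' t - k * f t = 0"
    and r: "0 \<le> r" "r < R"
  shows "f r = r * f' 0"
proof (cases "r = 0")
  case True
  then show ?thesis using ode[of 0] k r by simp
next
  case False
  have eq: "t * f' t = f t" if t: "0 < t" "t < R" for t
  proof -
    have "t * f' t - f t = 0"
    proof (rule euler_first_order_vanishes[where g = "\<lambda>t. t * f' t - f t", OF k _ _ t])
      show "((\<lambda>t. t * f' t - f t) has_real_derivative t * f'' t) (at t)" if "0 \<le> t" "t < R" for t
        using DERIV_diff[OF DERIV_mult[OF DERIV_ident d2] d1, of t] that by (simp add: mult.commute)
      show "t * (t * f'' t) + k * (t * f' t - f t) = 0" if "0 < t" "t < R" for t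
        using ode[of t] that by (simp add: power2_eq_square algebra_simps)
    qed
    then show ?thesis by simp
  qed
  have "f' r = f' 0"
  proof (rule eq_at_0_of_deriv_zero[OF d2 _ r])
    fix t assume t: "0 < t" "t < R"
    with ode[of t] eq[OF t] show "f'' t = 0" by (simp add: algebra_simps)
  qed
  with eq[of r] False r show ?thesis by simp
qed

lemma newton_kernel_combination_integral_eq:
  assumes h: "continuous_on {-1..1} h" and t: "\<bar>t\<bar> < 1"
    and I: "((\<lambda>x. h x * (a * newton_kernel_deriv2 m t x + b * newton_kernel_deriv m t x
      + c * newton_kernel m t x)) has_integral I) {-1..1}"
  shows "a * integral {-1..1} (\<lambda>x. h x * newton_kernel_deriv2 m t x)
    + b * integral {-1..1} (\<lambda>x. h x * newton_kernel_deriv m t x)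
    + c * integral {-1..1} (\<lambda>x. h x * newton_kernel m t x) = I"
proof -
  have "((\<lambda>x. a * (h x * newton_kernel_deriv2 m t x) + b * (h x * newton_kernel_deriv m t x)
      + c * (h x * newton_kernel m t x)) has_integral
    a * integral {-1..1} (\<lambda>x. h x * newton_kernel_deriv2 m t x)
      + b * integral {-1..1} (\<lambda>x. h x * newton_kernel_deriv m t x)
      + c * integral {-1..1} (\<lambda>x. h x * newton_kernel m t x)) {-1..1}"
    by (intro has_integral_add has_integral_mult_right integrable_integral
        integrable_weighted_newton_kernels[OF h t])
  moreover have "a * (h x * newton_kernel_deriv2 m t x) + b * (h x * newton_kernel_deriv m t x)
      + c * (h x * newton_kernel m t x)
    = h x * (a * newton_kernel_deriv2 m t x + b * newton_kernel_deriv m t x + c * newton_kernel m t x)" for x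
    by (simp add: algebra_simps)
  ultimately have "((\<lambda>x. h x * (a * newton_kernel_deriv2 m t x + b * newton_kernel_deriv m t x
      + c * newton_kernel m t x)) has_integral
    a * integral {-1..1} (\<lambda>x. h x * newton_kernel_deriv2 m t x)
      + b * integral {-1..1} (\<lambda>x. h x * newton_kernel_deriv m t x)
      + c * integral {-1..1} (\<lambda>x. h x * newton_kernel m t x)) {-1..1}"
    by simp
  from has_integral_unique[OF this I] show ?thesis .
qed

text \<open>The mean value property: the average of the harmonic function \<open>z \<mapsto> |e - z|^(2 - n)\<close> over the
  sphere of radius \<open>\<rho>\<close> is its value \<open>1\<close> at the centre.\<close>
lemma has_integral_weight_newton_kernel:
  assumes m: "1/2 \<le> m" and \<rho>: "0 \<le> \<rho>" "\<rho> < 1"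
  shows "((\<lambda>x. gegenbauer_weight (m - 1/2) x * newton_kernel m \<rho> x) has_integral moment (m - 1/2) 0) {-1..1}"
proof -
  define w where "w = gegenbauer_weight (m - 1/2)"
  have w: "continuous_on {-1..1} w" using m by (simp add: w_def continuous_on_gegenbauer_weight)
  define D D' D'' where "D r = integral {-1..1} (\<lambda>x. w x * newton_kernel m r x)"
    and "D' r = integral {-1..1} (\<lambda>x. w x * newton_kernel_deriv m r x)"
    and "D'' r = integral {-1..1} (\<lambda>x. w x * newton_kernel_deriv2 m r x)" for r
  have "D \<rho> = D 0"
  proof (rule euler_ode_const[where k = "2 * m + 1" and R = 1 and f' = D' and f'' = D''])
    fix t :: real
    assume "0 \<le> t" "t < 1"
    then have t: "\<bar>t\<bar> < 1" by simp
    show "(D has_real_derivative D' t) (at t)" "(D' has_real_derivative D'' t) (at t)"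
      unfolding D_def D'_def D''_def
      by (rule has_real_derivative_newton_potential[OF w t] has_real_derivative_newton_potential_deriv[OF w t])+
  next
    fix t :: real
    assume "0 < t" "t < 1"
    then have t: "\<bar>t\<bar> < 1" by simp
    have "((\<lambda>x. w x * (t\<^sup>2 * newton_kernel_deriv2 m t x + (2 * m + 1) * t * newton_kernel_deriv m t x
        + 0 * newton_kernel m t x)) has_integral 0) {-1..1}"
      using has_integral_laplace_weight[OF m t] by (simp add: w_def)
    from newton_kernel_combination_integral_eq[OF w t this]
    show "t\<^sup>2 * D'' t + (2 * m + 1) * t * D' t = 0" by (simp add: D_def D'_def D''_def)
  qed (use m \<rho> in auto)
  moreover have "D 0 = moment (m - 1/2) 0" by (simp add: D_def w_def moment_def)
  moreover have "(\<lambda>x. w x * newton_kernel m \<rho> x) integrable_on {-1..1}"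
    using \<rho> by (intro integrable_weighted_newton_kernels[OF w]) simp
  ultimately show ?thesis by (simp add: D_def w_def has_integral_integral)
qed

lemma has_integral_x_weight_newton_kernel:
  assumes m: "1/2 \<le> m" and \<rho>: "0 \<le> \<rho>" "\<rho> < 1"
  shows "((\<lambda>x. x * gegenbauer_weight (m - 1/2) x * newton_kernel m \<rho> x) has_integral
    \<rho> * (2 * m * moment (m - 1/2) 2)) {-1..1}"
proof -
  define h where "h x = x * gegenbauer_weight (m - 1/2) x" for x
  have h: "continuous_on {-1..1} h"
    using m unfolding h_def by (intro continuous_intros continuous_on_gegenbauer_weight) simp
  define E E' E'' where "E r = integral {-1..1} (\<lambda>x. h x * newton_kernel m r x)"
    and "E' r = integral {-1..1} (\<lambda>x. h x * newton_kernel_deriv m r x)"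
    and "E'' r = integral {-1..1} (\<lambda>x. h x * newton_kernel_deriv2 m r x)" for r
  have "E \<rho> = \<rho> * E' 0"
  proof (rule euler_ode_linear[where k = "2 * m + 1" and R = 1 and f'' = E''])
    fix t :: real
    assume "0 \<le> t" "t < 1"
    then have t: "\<bar>t\<bar> < 1" by simp
    show "(E has_real_derivative E' t) (at t)" "(E' has_real_derivative E'' t) (at t)"
      unfolding E_def E'_def E''_def
      by (rule has_real_derivative_newton_potential[OF h t] has_real_derivative_newton_potential_deriv[OF h t])+
    have "((\<lambda>x. h x * (t\<^sup>2 * newton_kernel_deriv2 m t x + (2 * m + 1) * t * newton_kernel_deriv m t x
        + - (2 * m + 1) * newton_kernel m t x)) has_integral 0) {-1..1}"
      by (rule has_integral_eq[OF _ has_integral_laplace_x_weight[OF m t]]) (simp add: h_def algebra_simps)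
    from newton_kernel_combination_integral_eq[OF h t this]
    show "t\<^sup>2 * E'' t + (2 * m + 1) * t * E' t - (2 * m + 1) * E t = 0"
      by (simp add: E_def E'_def E''_def algebra_simps)
  qed (use m \<rho> in auto)
  moreover have "newton_kernel_deriv m 0 x = 2 * m * x" for x
    by (simp add: newton_kernel_deriv_def dist_sq_def)
  then have "E' 0 = integral {-1..1} (\<lambda>x. 2 * m * (x ^ 2 * gegenbauer_weight (m - 1/2) x))"
    by (simp add: E'_def h_def power2_eq_square mult_ac)
  then have "E' 0 = 2 * m * moment (m - 1/2) 2" by (simp add: moment_def)
  moreover have "(\<lambda>x. h x * newton_kernel m \<rho> x) integrable_on {-1..1}"
    using \<rho> by (intro integrable_weighted_newton_kernels[OF h]) simp
  ultimately show ?thesis by (simp add: E_def h_def has_integral_integral)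
qed

lemma has_integral_axial_newton_kernel:
  assumes m: "1/2 \<le> m" and \<rho>: "0 \<le> \<rho>" "\<rho> < 1"
  shows "((\<lambda>x. (m / (m + 1) * \<rho> - x) * gegenbauer_weight (m - 1/2) x * newton_kernel m \<rho> x) has_integral 0)
    {-1..1}"
proof -
  have "moment (m - 1/2) 2 = moment (m - 1/2) 0 / (2 * m + 2)"
    using moment_even_step(1)[of "m - 1/2" 0] m by (simp add: numeral_2_eq_2)
  then have "m / (m + 1) * \<rho> * moment (m - 1/2) 0 - \<rho> * (2 * m * moment (m - 1/2) 2) = 0"
    using m by (simp add: field_simps)
  with has_integral_diff[OF has_integral_mult_left[OF has_integral_weight_newton_kernel[OF m \<rho>],
      of "m / (m + 1) * \<rho>"] has_integral_x_weight_newton_kernel[OF m \<rho>]]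
  show ?thesis by (simp add: algebra_simps)
qed

lemma hyp2F1_0 [simp]: "hyp2F1 a b c 0 = 1"
  unfolding hyp2F1_def using powser_sums_zero[of "\<lambda>k. pochhammer a k * pochhammer b k / (pochhammer c k * fact k)"]
  by (simp add: sums_iff)

lemma has_integral_newton_kernel_hyp2F1:
  assumes m: "1/2 \<le> m" and \<rho>: "0 \<le> \<rho>" "\<rho> < 1"
  shows "((\<lambda>x. (m / (m + 1) * \<rho> * cos \<alpha> - x) * gegenbauer_weight (m - 1/2) x
      * newton_kernel m \<rho> (cos \<alpha> * x) * hyp2F1 (m / 2) ((m + 1) / 2) (m + 1/2)
        (4 * \<rho>\<^sup>2 * (sin \<alpha>)\<^sup>2 * (1 - x\<^sup>2) / (dist_sq \<rho> (cos \<alpha> * x))\<^sup>2)) has_integral 0) {-1..1}"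
proof -
  define \<Phi> where "\<Phi> = (\<Sum>j. newton_coeff m \<rho> j
    * (m / (m + 1) * \<rho> * moment (m - 1/2) j - moment (m - 1/2) (j + 1)))"
  have "((\<lambda>x. (m / (m + 1) * \<rho> - x) * gegenbauer_weight (m - 1/2) x * newton_kernel m \<rho> x) has_integral \<Phi>)
      {-1..1}"
    using has_integral_newton_kernel_series[OF m \<rho>, of 1 0 "m / (m + 1)"] by (simp add: \<Phi>_def)
  with has_integral_axial_newton_kernel[OF m \<rho>] have "\<Phi> = 0" by (rule has_integral_unique[symmetric])
  with has_integral_newton_kernel_series[OF m \<rho>, of "cos \<alpha>" "sin \<alpha>" "m / (m + 1)"] show ?thesis
    by (simp add: \<Phi>_def)
qed

theorem lemma5:
  fixes n :: nat and \<rho> \<alpha> :: real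
  assumes "n \<ge> 3" and "0 \<le> \<rho>" and "\<rho> < 1" and "0 \<le> \<alpha>" and "\<alpha> \<le> pi / 2"
  shows "((\<lambda>x. ((real n - 2) / real n * \<rho> * cos \<alpha> - x) * (1 - x\<^sup>2) powr ((real n - 3) / 2)
              / (1 + \<rho>\<^sup>2 - 2 * \<rho> * x * cos \<alpha>) powr (real n / 2 - 1)
              * hyp2F1 ((real n - 2) / 4) (real n / 4) ((real n - 1) / 2)
                  (4 * \<rho>\<^sup>2 * (sin \<alpha>)\<^sup>2 * (1 - x\<^sup>2) / (1 + \<rho>\<^sup>2 - 2 * \<rho> * x * cos \<alpha>)\<^sup>2))
          has_integral 0) {-1..1}"
proof -
  define m where "m = real n / 2 - 1"
  have m: "1/2 \<le> m" using assms(1) by (simp add: m_def)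
  have params: "(real n - 2) / real n = m / (m + 1)" "(real n - 3) / 2 = m - 1/2" "real n / 2 - 1 = m"
    "(real n - 2) / 4 = m / 2" "real n / 4 = (m + 1) / 2" "(real n - 1) / 2 = m + 1/2"
    using assms(1) by (auto simp: m_def field_simps)
  show ?thesis
  proof (rule has_integral_spike_finite[OF _ _ has_integral_newton_kernel_hyp2F1[OF m assms(2,3)]])
    fix x :: real
    assume "x \<in> {-1..1} - {-1, 1}"
    then have "x \<in> {-1<..<1}" by auto
    then show "((real n - 2) / real n * \<rho> * cos \<alpha> - x) * (1 - x\<^sup>2) powr ((real n - 3) / 2)
        / (1 + \<rho>\<^sup>2 - 2 * \<rho> * x * cos \<alpha>) powr (real n / 2 - 1)
        * hyp2F1 ((real n - 2) / 4) (real n / 4) ((real n - 1) / 2)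
            (4 * \<rho>\<^sup>2 * (sin \<alpha>)\<^sup>2 * (1 - x\<^sup>2) / (1 + \<rho>\<^sup>2 - 2 * \<rho> * x * cos \<alpha>)\<^sup>2)
      = (m / (m + 1) * \<rho> * cos \<alpha> - x) * gegenbauer_weight (m - 1/2) x
        * newton_kernel m \<rho> (cos \<alpha> * x) * hyp2F1 (m / 2) ((m + 1) / 2) (m + 1/2)
          (4 * \<rho>\<^sup>2 * (sin \<alpha>)\<^sup>2 * (1 - x\<^sup>2) / (dist_sq \<rho> (cos \<alpha> * x))\<^sup>2)"
      unfolding params
      by (simp add: gegenbauer_weight_eq newton_kernel_def dist_sq_def powr_minus_divide mult_ac)
  qed simp
qed

end
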